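(* Fix a constant $c\ge1$. There is a constant $C>0$ depending only on $c$ such that for all integers $n\ge3$, $U\ge3$ with $n/c\le U\le cn$, all $\epsilon\in(0,1/2]$, and all $t\ge C\,n\log(1/\epsilon)$, $$v(t):=\max_{i}\big\|(K^t)_i-\pi\big\|_1\le\epsilon,$$ where $(K^t)_i$ denotes the row of $K^t$ indexed by state $i$, the maximum is over all $2n$ states, and $\pi$ is the stationary distribution of the original chain.
   Context: Let $n\ge3$ and $U\ge3$ be integers. The "original chain" is the Markov chain on the $2n$ states $\{1,\dots,n,1',\dots,n'\}$ with the following transition probabilities (all unlisted transitions have probability $0$): for $2\le i\le n-1$: $i\to i$ w.p. $1/2$, $i\to i+1$ w.p. $\frac12(1-\frac1U)$, $i\to(i+1)'$ w.p. $\frac1{2U}$; for $2\le i\le n-1$: $i'\to i'$ w.p. $1/2$, $i'\to(i-1)'$ w.p. $\frac12(1-\frac1U)$, $i'\to i-1$ w.p. $\frac1{2U}$; $1\to2$ w.p. $1-\frac1U$, $1\to2'$ w.p. $\frac1U$; $1'\to1$ w.p. $1-\frac1U$, $1'\to1'$ w.p. $\frac1U$; $n\to n'$ w.p. $1-\frac1U$, $n\to n$ w.p. $\frac1U$; $n'\to(n-1)'$ w.p. $1-\frac1U$, $n'\to n-1$ w.p. $\frac1U$. $K$ is its $2n\times 2n$ row-stochastic transition matrix ($K_{xy}$ = probability of moving from $x$ to $y$), and $\pi$ its unique stationary distribution ($\pi K=\pi$). *)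

theory Defs
  imports Complex_Main
begin

text \<open>States: (i, False) is state i, (i, True) is state i', for 1 \<le> i \<le> n.\<close>

type_synonym state = "nat \<times> bool"

definition states :: "nat \<Rightarrow> state set" where
  "states n = {1..n} \<times> UNIV"

definition K :: "nat \<Rightarrow> nat \<Rightarrow> state \<Rightarrow> state \<Rightarrow> real" where
  "K n U x y = (let u = real U; i = fst x in
    if x \<notin> states n \<or> y \<notin> states n then 0
    else if \<not> snd x then
      (if i = 1 then
         (if y = (2, False) then 1 - 1/u else if y = (2, True) then 1/u else 0)
       else if i = n then
         (if y = (n, True) then 1 - 1/u else if y = (n, False) then 1/u else 0)
       else
         (if y = (i, False) then 1/2
          else if y = (i+1, False) then (1/2) * (1 - 1/u)
          else if y = (i+1, True) then 1/(2*u) else 0))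
    else
      (if i = 1 then
         (if y = (1, False) then 1 - 1/u else if y = (1, True) then 1/u else 0)
       else if i = n then
         (if y = (n-1, True) then 1 - 1/u else if y = (n-1, False) then 1/u else 0)
       else
         (if y = (i, True) then 1/2
          else if y = (i-1, True) then (1/2) * (1 - 1/u)
          else if y = (i-1, False) then 1/(2*u) else 0)))"

fun Kpow :: "nat \<Rightarrow> nat \<Rightarrow> nat \<Rightarrow> state \<Rightarrow> state \<Rightarrow> real" where
  "Kpow n U 0 x y = (if x = y then 1 else 0)"
| "Kpow n U (Suc t) x y = (\<Sum>z\<in>states n. Kpow n U t x z * K n U z y)"

definition is_stationary :: "nat \<Rightarrow> nat \<Rightarrow> (state \<Rightarrow> real) \<Rightarrow> bool" where
  "is_stationary n U p \<longleftrightarrow>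
     (\<forall>x\<in>states n. p x \<ge> 0) \<and> (\<forall>x. x \<notin> states n \<longrightarrow> p x = 0) \<and>
     (\<Sum>x\<in>states n. p x) = 1 \<and>
     (\<forall>y\<in>states n. (\<Sum>x\<in>states n. p x * K n U x y) = p y)"

definition stat :: "nat \<Rightarrow> nat \<Rightarrow> state \<Rightarrow> real" where
  "stat n U = (THE p. is_stationary n U p)"

definition v :: "nat \<Rightarrow> nat \<Rightarrow> nat \<Rightarrow> real" where
  "v n U t = (MAX x\<in>states n. \<Sum>y\<in>states n. \<bar>Kpow n U t x y - stat n U y\<bar>)"

end

theory Submission
  imports Defs
begin

(*
  Relabel the 2n states along a cycle of length 2n,
      1', 1, 2, ..., n, n', (n-1)', ..., 2'   (positions 0, 1, ..., 2n-1).
  In these coordinates K becomes the kernel Kcyc = Krot + Krefl: Krot moves one step forward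
  along the cycle (lazy with holding probability 1/2, except at the four end positions
  0, 1, n, n+1) damped by the factor 1 - 1/U, and Krefl jumps to the mirror position -j with
  probability of order 1/U.  The weights 1 (end positions) and 2 (others), normalised, are
  stationary.

  The heart of the argument is a Doeblin minorisation: every entry of Kcyc^(8n+1) is at least
  minor = (1-1/U)^(8n) / (64 U).  Keeping only the paths with exactly one reflection gives
      Kcyc^(T+1)(i,k) >= (1-1/U)^T / (2U) * sum_s sum_j Qf^s(i,j) Qf^(T-s)(-j,k),   T = 8n,
  where Qf is the undamped lazy forward walk.  The double sum adds up, over the reflection time,
  the probability that a forward walker from i and a backward walker run towards -k occupy the
  same position; following both walkers jointly (the "gap process") and using exponential-moment
  (Chernoff) bounds shows that it is >= 1/32.

  Doeblin's argument then yields  v(t) <= 2 (1 - 2n minor)^(t div (8n+1)), which also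
  identifies the stationary distribution, and for n/c <= U <= cn one has
  2n minor >= exp(-16c)/(32c), from which the theorem follows.
*)

section \<open>Powers of stochastic matrices and Doeblin's argument\<close>

fun matpow :: "nat \<Rightarrow> (nat \<Rightarrow> nat \<Rightarrow> real) \<Rightarrow> nat \<Rightarrow> nat \<Rightarrow> nat \<Rightarrow> real" where
  "matpow N A 0 i k = (if i = k then 1 else 0)"
| "matpow N A (Suc t) i k = (\<Sum>j<N. matpow N A t i j * A j k)"

lemma sum_kronecker_left: "i < (N::nat) \<Longrightarrow> (\<Sum>j<N. (if i = j then 1 else 0) * f j) = (f i :: real)"
proof -
  assume "i < N"
  have "(\<Sum>j<N. (if i = j then 1 else 0) * f j) = (\<Sum>j<N. if i = j then f j else 0)"
    by (rule sum.cong) auto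
  then show ?thesis using \<open>i < N\<close> by simp
qed

lemma sum_kronecker_right: "k < (N::nat) \<Longrightarrow> (\<Sum>j<N. f j * (if j = k then 1 else 0)) = (f k :: real)"
proof -
  assume "k < N"
  have "(\<Sum>j<N. f j * (if j = k then 1 else 0)) = (\<Sum>j<N. if k = j then f j else 0)"
    by (rule sum.cong) auto
  then show ?thesis using \<open>k < N\<close> by simp
qed

lemma matpow_add: "k < N \<Longrightarrow> matpow N A (a + b) i k = (\<Sum>j<N. matpow N A a i j * matpow N A b j k)"
proof (induction b arbitrary: k)
  case 0
  then show ?case by (simp add: sum_kronecker_right)
next
  case (Suc b)
  have "matpow N A (a + Suc b) i k = (\<Sum>j<N. (\<Sum>l<N. matpow N A a i l * matpow N A b l j) * A j k)"
    using Suc.IH by simp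
  also have "\<dots> = (\<Sum>j<N. \<Sum>l<N. matpow N A a i l * matpow N A b l j * A j k)"
    by (simp add: sum_distrib_right)
  also have "\<dots> = (\<Sum>l<N. \<Sum>j<N. matpow N A a i l * matpow N A b l j * A j k)"
    by (rule sum.swap)
  also have "\<dots> = (\<Sum>l<N. matpow N A a i l * (\<Sum>j<N. matpow N A b l j * A j k))"
    by (simp add: sum_distrib_left mult.assoc)
  finally show ?case by simp
qed

lemma matpow_1: "i < N \<Longrightarrow> matpow N A 1 i j = A i j"
  using sum_kronecker_left[of i N "\<lambda>l. A l j"] by simp

lemma matpow_Suc_left: "i < N \<Longrightarrow> k < N \<Longrightarrow> matpow N A (Suc t) i k = (\<Sum>j<N. A i j * matpow N A t j k)"
  using matpow_add[of k N A 1 t i] by (simp only: matpow_1 add.commute[of 1] plus_1_eq_Suc)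

lemma matpow_Suc_apply:
  "(\<Sum>k<N. matpow N A t i k * (\<Sum>j<N. A k j * h j)) = (\<Sum>j<N. matpow N A (Suc t) i j * (h j :: real))"
proof -
  have "(\<Sum>k<N. matpow N A t i k * (\<Sum>j<N. A k j * h j)) = (\<Sum>k<N. \<Sum>j<N. matpow N A t i k * A k j * h j)"
    by (simp add: sum_distrib_left mult.assoc)
  also have "\<dots> = (\<Sum>j<N. \<Sum>k<N. matpow N A t i k * A k j * h j)" by (rule sum.swap)
  also have "\<dots> = (\<Sum>j<N. matpow N A (Suc t) i j * h j)" by (simp add: sum_distrib_right)
  finally show ?thesis .
qed

lemma matpow_nonneg:
  "(\<And>i j. i < N \<Longrightarrow> j < N \<Longrightarrow> 0 \<le> A i j) \<Longrightarrow> j < N \<Longrightarrow> 0 \<le> matpow N A t i j"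
  by (induction t arbitrary: j) (auto intro!: sum_nonneg mult_nonneg_nonneg)

lemma matpow_row_sum:
  assumes "\<And>i. i < N \<Longrightarrow> (\<Sum>j<N. A i j) = 1" and "i < N"
  shows "(\<Sum>j<N. matpow N A t i j) = 1"
proof (induction t)
  case 0
  then show ?case using assms(2) by simp
next
  case (Suc t)
  have "(\<Sum>k<N. matpow N A (Suc t) i k) = (\<Sum>k<N. \<Sum>j<N. matpow N A t i j * A j k)" by simp
  also have "\<dots> = (\<Sum>j<N. matpow N A t i j * (\<Sum>k<N. A j k))"
    by (subst sum.swap) (simp add: sum_distrib_left)
  finally have "(\<Sum>k<N. matpow N A (Suc t) i k) = \<dots>" .
  then show ?case using Suc assms(1) by simp
qed

lemma matpow_mono:
  assumes "\<And>i j. i < N \<Longrightarrow> j < N \<Longrightarrow> 0 \<le> A i j" and "\<And>i j. i < N \<Longrightarrow> j < N \<Longrightarrow> A i j \<le> A' i j"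
  shows "j < N \<Longrightarrow> matpow N A t i j \<le> matpow N A' t i j"
proof (induction t arbitrary: j)
  case 0 then show ?case by simp
next
  case (Suc t)
  have "(\<Sum>l<N. matpow N A t i l * A l j) \<le> (\<Sum>l<N. matpow N A' t i l * A' l j)"
  proof (rule sum_mono)
    fix l assume l: "l \<in> {..<N}"
    have "0 \<le> matpow N A t i l" using matpow_nonneg[of N A] assms(1) l by auto
    then show "matpow N A t i l * A l j \<le> matpow N A' t i l * A' l j"
      using Suc assms l by (intro mult_mono') auto
  qed
  then show ?case by simp
qed

lemma matpow_scale: "matpow N (\<lambda>i j. c * A i j) t i k = c ^ t * matpow N A t i k"
  by (induction t arbitrary: k) (auto simp: sum_distrib_left mult_ac)

lemma matpow_stationary:
  assumes "\<And>k. k < N \<Longrightarrow> (\<Sum>i<N. p i * A i k) = p k"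
  shows "k < N \<Longrightarrow> (\<Sum>i<N. p i * matpow N A t i k) = p k"
proof (induction t arbitrary: k)
  case 0
  then show ?case by (simp add: sum_kronecker_right)
next
  case (Suc t)
  have "(\<Sum>i<N. p i * matpow N A (Suc t) i k) = (\<Sum>i<N. \<Sum>j<N. p i * matpow N A t i j * A j k)"
    by (simp add: sum_distrib_left mult.assoc)
  also have "\<dots> = (\<Sum>j<N. (\<Sum>i<N. p i * matpow N A t i j) * A j k)"
    by (subst sum.swap) (simp add: sum_distrib_right)
  finally have "(\<Sum>i<N. p i * matpow N A (Suc t) i k) = \<dots>" .
  then show ?case using Suc assms by simp
qed

lemma matpow_relabel:
  assumes bij: "bij_betw \<rho> {..<N} {..<N}" and BA: "\<And>i k. i < N \<Longrightarrow> k < N \<Longrightarrow> B i k = A (\<rho> i) (\<rho> k)"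
  shows "i < N \<Longrightarrow> k < N \<Longrightarrow> matpow N B t i k = matpow N A t (\<rho> i) (\<rho> k)"
proof (induction t arbitrary: k)
  case 0
  have "\<rho> i = \<rho> k \<longleftrightarrow> i = k" using bij 0 by (auto simp: bij_betw_def inj_on_def)
  then show ?case by simp
next
  case (Suc t)
  have "matpow N B (Suc t) i k = (\<Sum>j<N. matpow N A t (\<rho> i) (\<rho> j) * A (\<rho> j) (\<rho> k))"
    using Suc by (simp add: BA)
  also have "\<dots> = (\<Sum>j<N. matpow N A t (\<rho> i) j * A j (\<rho> k))"
    using sum.reindex_bij_betw[OF bij, of "\<lambda>j. matpow N A t (\<rho> i) j * A j (\<rho> k)"] by simp
  finally show ?case by simp
qed

text \<open>
  If K dominates L + R entrywise, then K^(t+1) dominates the total weight of the paths of length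
  t+1 that use exactly one R-step (and L-steps otherwise).
\<close>

definition one_jump :: "nat \<Rightarrow> (nat \<Rightarrow> nat \<Rightarrow> real) \<Rightarrow> (nat \<Rightarrow> nat \<Rightarrow> real) \<Rightarrow> nat \<Rightarrow> nat \<Rightarrow> nat \<Rightarrow> real" where
  "one_jump N L R t i k = (\<Sum>s\<le>t. \<Sum>j<N. matpow N L s i j * (\<Sum>l<N. R j l * matpow N L (t - s) l k))"

text \<open>Recursion: a one-jump path of length t+2 either ends with an L-step or jumps last.\<close>

lemma one_jump_Suc:
  assumes k: "k < N"
  shows "one_jump N L R (Suc t) i k
       = (\<Sum>k'<N. one_jump N L R t i k' * L k' k) + (\<Sum>k'<N. matpow N L (Suc t) i k' * R k' k)"
proof -
  have "(\<Sum>k'<N. one_jump N L R t i k' * L k' k)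
      = (\<Sum>k'<N. \<Sum>s\<le>t. \<Sum>j<N. \<Sum>l<N. matpow N L s i j * R j l * (matpow N L (t - s) l k' * L k' k))"
    unfolding one_jump_def by (simp only: sum_distrib_right sum_distrib_left mult.assoc)
  also have "\<dots> = (\<Sum>s\<le>t. \<Sum>j<N. \<Sum>l<N. \<Sum>k'<N. matpow N L s i j * R j l * (matpow N L (t - s) l k' * L k' k))"
    by (subst sum.swap, rule sum.cong[OF refl], subst sum.swap, rule sum.cong[OF refl], rule sum.swap)
  also have "\<dots> = (\<Sum>s\<le>t. \<Sum>j<N. \<Sum>l<N. matpow N L s i j * R j l * (\<Sum>k'<N. matpow N L (t - s) l k' * L k' k))"
    by (simp only: sum_distrib_left)
  also have "\<dots> = (\<Sum>s\<le>t. \<Sum>j<N. matpow N L s i j * (\<Sum>l<N. R j l * matpow N L (Suc t - s) l k))"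
    by (intro sum.cong refl) (simp add: sum_distrib_left mult.assoc Suc_diff_le)
  finally have early: "(\<Sum>k'<N. one_jump N L R t i k' * L k' k) = \<dots>" .
  have last: "(\<Sum>k'<N. matpow N L (Suc t) i k' * R k' k)
      = (\<Sum>j<N. matpow N L (Suc t) i j * (\<Sum>l<N. R j l * matpow N L (Suc t - Suc t) l k))"
    using k by (simp add: sum_kronecker_right)
  show ?thesis unfolding early last by (simp add: one_jump_def atMost_Suc)
qed

lemma one_jump_le:
  assumes L0: "\<And>i j. i < N \<Longrightarrow> j < N \<Longrightarrow> 0 \<le> L i j" and R0: "\<And>i j. i < N \<Longrightarrow> j < N \<Longrightarrow> 0 \<le> R i j"
    and LRP: "\<And>i j. i < N \<Longrightarrow> j < N \<Longrightarrow> L i j + R i j \<le> P i j"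
  shows "k < N \<Longrightarrow> one_jump N L R t i k \<le> matpow N P (Suc t) i k"
proof -
  have RP: "R a b \<le> P a b" and LP: "L a b \<le> P a b" and P0: "0 \<le> P a b"
    if "a < N" "b < N" for a b
    using L0[OF that] R0[OF that] LRP[OF that] by linarith+
  show "k < N \<Longrightarrow> one_jump N L R t i k \<le> matpow N P (Suc t) i k"
  proof (induction t arbitrary: k)
    case 0
    have "one_jump N L R 0 i k = (\<Sum>j<N. (if i = j then 1 else 0) * R j k)"
      unfolding one_jump_def using 0 by (simp add: sum_kronecker_right)
    also have "\<dots> \<le> (\<Sum>j<N. (if i = j then 1 else 0) * P j k)"
      using RP 0 by (intro sum_mono mult_left_mono) auto
    finally show ?case by simp
  next
    case (Suc t)
    have LPpow: "matpow N L (Suc t) i k' \<le> matpow N P (Suc t) i k'" if "k' < N" for k'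
      using matpow_mono[of N L P, OF L0 LP] that by blast
    have "one_jump N L R (Suc t) i k \<le> (\<Sum>k'<N. matpow N P (Suc t) i k' * (L k' k + R k' k))"
      unfolding one_jump_Suc[OF Suc.prems] sum.distrib[symmetric] distrib_left
      using Suc.IH LPpow L0 R0 Suc.prems by (intro sum_mono add_mono mult_right_mono) auto
    also have "\<dots> \<le> (\<Sum>k'<N. matpow N P (Suc t) i k' * P k' k)"
      using LRP Suc.prems by (intro sum_mono mult_left_mono matpow_nonneg[of N P, OF P0]) auto
    finally show ?case by simp
  qed
qed

lemma doeblin_contraction:
  assumes P0: "\<And>i j. i < N \<Longrightarrow> j < N \<Longrightarrow> \<beta> \<le> P i j" and Ps: "\<And>i. i < N \<Longrightarrow> (\<Sum>j<N. P i j) = 1"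
    and f0: "(\<Sum>i<N. f i) = 0"
  shows "(\<Sum>j<N. \<bar>\<Sum>i<N. f i * P i j\<bar>) \<le> (1 - real N * \<beta>) * (\<Sum>i<N. \<bar>f i\<bar>)"
proof -
  have "(\<Sum>i<N. f i * P i j) = (\<Sum>i<N. f i * (P i j - \<beta>))" for j
    using f0 by (simp add: right_diff_distrib sum_subtractf sum_distrib_right[symmetric])
  then have "(\<Sum>j<N. \<bar>\<Sum>i<N. f i * P i j\<bar>) = (\<Sum>j<N. \<bar>\<Sum>i<N. f i * (P i j - \<beta>)\<bar>)" by simp
  also have "\<dots> \<le> (\<Sum>j<N. \<Sum>i<N. \<bar>f i\<bar> * (P i j - \<beta>))"
  proof (rule sum_mono)
    fix j assume j: "j \<in> {..<N}"
    have "\<bar>\<Sum>i<N. f i * (P i j - \<beta>)\<bar> \<le> (\<Sum>i<N. \<bar>f i * (P i j - \<beta>)\<bar>)" by (rule sum_abs)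
    also have "\<dots> = (\<Sum>i<N. \<bar>f i\<bar> * (P i j - \<beta>))"
      using P0 j by (intro sum.cong refl) (simp add: abs_mult)
    finally show "\<bar>\<Sum>i<N. f i * (P i j - \<beta>)\<bar> \<le> (\<Sum>i<N. \<bar>f i\<bar> * (P i j - \<beta>))" .
  qed
  also have "\<dots> = (\<Sum>i<N. \<bar>f i\<bar> * (1 - real N * \<beta>))"
    using Ps by (subst sum.swap) (simp add: sum_distrib_left[symmetric] sum_subtractf)
  also have "\<dots> = (1 - real N * \<beta>) * (\<Sum>i<N. \<bar>f i\<bar>)" by (simp add: sum_distrib_left mult.commute)
  finally show ?thesis .
qed

lemma stochastic_l1_nonexpansive:
  fixes P :: "nat \<Rightarrow> nat \<Rightarrow> real"
  assumes P0: "\<And>i j. i < (N::nat) \<Longrightarrow> j < N \<Longrightarrow> 0 \<le> P i j" and Ps: "\<And>i. i < N \<Longrightarrow> (\<Sum>j<N. P i j) = 1"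
  shows "(\<Sum>j<N. \<bar>\<Sum>i<N. f i * P i j\<bar>) \<le> (\<Sum>i<N. \<bar>f i\<bar>)"
proof -
  have "(\<Sum>j<N. \<bar>\<Sum>i<N. f i * P i j\<bar>) \<le> (\<Sum>j<N. \<Sum>i<N. \<bar>f i\<bar> * P i j)"
  proof (rule sum_mono)
    fix j assume j: "j \<in> {..<N}"
    have "\<bar>\<Sum>i<N. f i * P i j\<bar> \<le> (\<Sum>i<N. \<bar>f i * P i j\<bar>)" by (rule sum_abs)
    also have "\<dots> = (\<Sum>i<N. \<bar>f i\<bar> * P i j)" using P0 j by (intro sum.cong refl) (simp add: abs_mult)
    finally show "\<bar>\<Sum>i<N. f i * P i j\<bar> \<le> (\<Sum>i<N. \<bar>f i\<bar> * P i j)" .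
  qed
  also have "\<dots> = (\<Sum>i<N. \<bar>f i\<bar>)"
    using Ps by (subst sum.swap) (simp add: sum_distrib_left[symmetric])
  finally show ?thesis .
qed

definition dist_l1 :: "nat \<Rightarrow> (nat \<Rightarrow> nat \<Rightarrow> real) \<Rightarrow> (nat \<Rightarrow> real) \<Rightarrow> nat \<Rightarrow> nat \<Rightarrow> real" where
  "dist_l1 N A p i t = (\<Sum>j<N. \<bar>matpow N A t i j - p j\<bar>)"

locale stochastic_matrix =
  fixes N :: nat and A :: "nat \<Rightarrow> nat \<Rightarrow> real" and p :: "nat \<Rightarrow> real"
  assumes nonneg: "\<And>i j. i < N \<Longrightarrow> j < N \<Longrightarrow> 0 \<le> A i j"
    and row_sum: "\<And>i. i < N \<Longrightarrow> (\<Sum>j<N. A i j) = 1"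
    and stationary: "\<And>k. k < N \<Longrightarrow> (\<Sum>i<N. p i * A i k) = p k"
    and distribution: "(\<Sum>i<N. p i) = 1" "\<And>j. 0 \<le> p j"
begin

lemma dist_l1_shift:
  "dist_l1 N A p i (t + m) = (\<Sum>j<N. \<bar>\<Sum>l<N. (matpow N A t i l - p l) * matpow N A m l j\<bar>)"
proof -
  have "matpow N A (t + m) i j - p j = (\<Sum>l<N. (matpow N A t i l - p l) * matpow N A m l j)"
    if j: "j < N" for j
    using matpow_add[OF j] matpow_stationary[OF stationary j, of m]
    by (simp add: left_diff_distrib sum_subtractf)
  then show ?thesis unfolding dist_l1_def by (intro sum.cong refl) auto
qed

lemma deviation_sum_zero: "i < N \<Longrightarrow> (\<Sum>l<N. matpow N A t i l - p l) = 0"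
  using matpow_row_sum[OF row_sum] distribution by (simp add: sum_subtractf)

lemma dist_l1_antimono: "dist_l1 N A p i (t + m) \<le> dist_l1 N A p i t"
  unfolding dist_l1_shift
  using stochastic_l1_nonexpansive[of N "matpow N A m", OF matpow_nonneg[OF nonneg] matpow_row_sum[OF row_sum]]
  by (simp add: dist_l1_def)

lemma dist_l1_contraction:
  assumes "i < N" and "\<And>a b. a < N \<Longrightarrow> b < N \<Longrightarrow> \<beta> \<le> matpow N A M a b"
  shows "dist_l1 N A p i (t + M) \<le> (1 - real N * \<beta>) * dist_l1 N A p i t"
  unfolding dist_l1_shift
  using doeblin_contraction[of N \<beta> "matpow N A M", OF assms(2) matpow_row_sum[OF row_sum]
      deviation_sum_zero[OF assms(1)]]
  by (simp add: dist_l1_def)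

lemma doeblin_mixing:
  assumes i: "i < N" and minor: "\<And>a b. a < N \<Longrightarrow> b < N \<Longrightarrow> \<beta> \<le> matpow N A M a b"
  shows "dist_l1 N A p i t \<le> 2 * (1 - real N * \<beta>) ^ (t div M)"
proof -
  have start: "dist_l1 N A p i 0 \<le> 2"
  proof -
    have "dist_l1 N A p i 0 \<le> (\<Sum>j<N. \<bar>matpow N A 0 i j\<bar> + \<bar>p j\<bar>)"
      unfolding dist_l1_def by (intro sum_mono abs_triangle_ineq4)
    also have "\<dots> = 2" using i distribution by (simp add: sum.distrib)
    finally show ?thesis .
  qed
  have factor: "0 \<le> 1 - real N * \<beta>"
  proof -
    have "(\<Sum>b<N. \<beta>) \<le> (\<Sum>b<N. matpow N A M i b)" using minor i by (intro sum_mono) auto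
    then show ?thesis using matpow_row_sum[OF row_sum i] by simp
  qed
  have geometric: "dist_l1 N A p i (q * M) \<le> 2 * (1 - real N * \<beta>) ^ q" for q
  proof (induction q)
    case 0 then show ?case using start by simp
  next
    case (Suc q)
    have "dist_l1 N A p i (q * M + M) \<le> (1 - real N * \<beta>) * dist_l1 N A p i (q * M)"
      by (rule dist_l1_contraction[OF i minor])
    also have "\<dots> \<le> (1 - real N * \<beta>) * (2 * (1 - real N * \<beta>) ^ q)"
      using Suc factor by (intro mult_left_mono)
    finally show ?case by (simp add: algebra_simps)
  qed
  have "dist_l1 N A p i t \<le> dist_l1 N A p i ((t div M) * M)"
    using dist_l1_antimono[of i "(t div M) * M" "t mod M"] by simp
  then show ?thesis using geometric order.trans by blast
qed

end

section \<open>The cycle of length 2n and the lazy walks on it\<close>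

text \<open>
  Positions on the cycle are 0, ..., 2n-1.  The four end positions 0, 1, n, n+1 correspond to
  the states 1', 1, n, n' of the original chain, where the chain does not hold.
\<close>

definition cnext :: "nat \<Rightarrow> nat \<Rightarrow> nat" where "cnext n j = (if j + 1 = 2*n then 0 else j + 1)"
definition cprev :: "nat \<Rightarrow> nat \<Rightarrow> nat" where "cprev n j = (if j = 0 then 2*n - 1 else j - 1)"
definition cmirror :: "nat \<Rightarrow> nat \<Rightarrow> nat" where "cmirror n j = (if j = 0 then 0 else 2*n - j)"
definition is_end :: "nat \<Rightarrow> nat \<Rightarrow> bool" where "is_end n j \<longleftrightarrow> j = 0 \<or> j = 1 \<or> j = n \<or> j = n+1"

definition hold :: "nat \<Rightarrow> nat \<Rightarrow> real" where "hold n j = (if is_end n j then 0 else 1/2)"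
definition Qf :: "nat \<Rightarrow> nat \<Rightarrow> nat \<Rightarrow> real" where
  "Qf n j j' = (if j' = j then hold n j else 0) + (if j' = cnext n j then 1 - hold n j else 0)"
definition hold_back :: "nat \<Rightarrow> nat \<Rightarrow> real" where "hold_back n a = hold n (cmirror n a)"
definition Qb :: "nat \<Rightarrow> nat \<Rightarrow> nat \<Rightarrow> real" where
  "Qb n a a' = (if a' = a then hold_back n a else 0) + (if a' = cprev n a then 1 - hold_back n a else 0)"

text \<open>Unnormalised stationary weights: 1 at the end positions, 2 elsewhere.\<close>
definition weight :: "nat \<Rightarrow> nat \<Rightarrow> real" where "weight n j = (if is_end n j then 1 else 2)"

lemma cnext_lt[simp]: "j < 2*n \<Longrightarrow> cnext n j < 2*n" by (auto simp: cnext_def)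
lemma cprev_lt[simp]: "j < 2*n \<Longrightarrow> cprev n j < 2*n" by (auto simp: cprev_def)
lemma cprev_cnext[simp]: "j < 2*n \<Longrightarrow> cprev n (cnext n j) = j" by (auto simp: cprev_def cnext_def)
lemma cmirror_lt[simp]: "j < 2*n \<Longrightarrow> cmirror n j < 2*n" by (auto simp: cmirror_def)
lemma cnext_cprev[simp]: "j < 2*n \<Longrightarrow> cnext n (cprev n j) = j" by (auto simp: cprev_def cnext_def)
lemma cmirror_cmirror[simp]: "j < 2*n \<Longrightarrow> cmirror n (cmirror n j) = j" by (auto simp: cmirror_def)
lemma cnext_neq: "n \<ge> 1 \<Longrightarrow> j < 2*n \<Longrightarrow> cnext n j \<noteq> j" by (auto simp: cnext_def) presburger
lemma cprev_neq: "n \<ge> 1 \<Longrightarrow> j < 2*n \<Longrightarrow> cprev n j \<noteq> j" by (auto simp: cprev_def)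
lemma cmirror_cprev: "j < 2*n \<Longrightarrow> cmirror n (cprev n j) = cnext n (cmirror n j)"
  by (auto simp: cmirror_def cprev_def cnext_def)
lemma cmirror_cnext: "j < 2*n \<Longrightarrow> cmirror n (cnext n j) = cprev n (cmirror n j)"
  by (auto simp: cmirror_def cprev_def cnext_def)
lemma cnext_eq_iff: "j < 2*n \<Longrightarrow> k < 2*n \<Longrightarrow> (k = cnext n j) = (j = cprev n k)"
  by (auto simp: cprev_def cnext_def)
lemma cprev_eq_iff: "j < 2*n \<Longrightarrow> k < 2*n \<Longrightarrow> (k = cprev n j) = (j = cnext n k)"
  by (auto simp: cprev_def cnext_def)
lemma cmirror_eq_iff: "a < 2*n \<Longrightarrow> b < 2*n \<Longrightarrow> (b = cmirror n a) = (a = cmirror n b)"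
  by (metis cmirror_cmirror)

lemma hold_nonneg: "0 \<le> hold n j" by (simp add: hold_def)
lemma hold_le: "hold n j \<le> 1/2" by (simp add: hold_def)
lemma hold_compl_nonneg: "0 \<le> 1 - hold n j" using hold_le[of n j] by simp
lemma hold_back_nonneg: "0 \<le> hold_back n j" by (simp add: hold_back_def hold_nonneg)
lemma hold_back_le: "hold_back n j \<le> 1/2" by (simp add: hold_back_def hold_def)
lemma hold_back_compl_nonneg: "0 \<le> 1 - hold_back n j" using hold_back_le[of n j] by simp

lemma weight_ge1: "1 \<le> weight n j" by (simp add: weight_def)
lemma weight_le2: "weight n j \<le> 2" by (simp add: weight_def)

lemma bij_cprev: "bij_betw (cprev n) {..<2*n} {..<2*n}"
  by (rule bij_betw_byWitness[where f'="cnext n"]) auto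

lemma bij_cmirror: "bij_betw (cmirror n) {..<2*n} {..<2*n}"
  by (rule bij_betw_byWitness[where f'="cmirror n"]) auto

lemma sum_reindex_cprev: "(\<Sum>k<2*n. f (cprev n k)) = (\<Sum>k<2*n. (f k :: real))"
  using sum.reindex_bij_betw[OF bij_cprev, of f] by simp

lemma Qb_eq_mirror_Qf:
  assumes a: "a < 2*n" and a': "a' < 2*n"
  shows "Qb n a a' = Qf n (cmirror n a) (cmirror n a')"
proof -
  have "(cmirror n a' = cmirror n a) = (a' = a)" using a a' by (metis cmirror_cmirror)
  moreover have "(cmirror n a' = cnext n (cmirror n a)) = (a' = cprev n a)"
    using a a' by (metis cmirror_cmirror cmirror_cprev cprev_lt)
  ultimately show ?thesis by (simp add: Qb_def Qf_def hold_back_def)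
qed

lemma Qf_nonneg: "0 \<le> Qf n j j'"
  using hold_le[of n j] hold_nonneg[of n j] by (simp add: Qf_def)
lemma Qb_nonneg: "0 \<le> Qb n j j'"
  using hold_back_le[of n j] hold_back_nonneg[of n j] by (simp add: Qb_def)

lemma sum_two_points:
  assumes "a < (N::nat)" "b < N" "a \<noteq> b"
  shows "(\<Sum>j<N. ((if j = a then x else 0) + (if j = b then y else 0)) * f j) = x * f a + (y * f b :: real)"
proof -
  have "(\<Sum>j<N. ((if j = a then x else 0) + (if j = b then y else 0)) * f j)
      = (\<Sum>j<N. (if a = j then x * f j else 0)) + (\<Sum>j<N. (if b = j then y * f j else 0))"
    using assms by (subst sum.distrib[symmetric], intro sum.cong) auto
  then show ?thesis using assms by simp
qed

lemma Qf_row: "n \<ge> 1 \<Longrightarrow> k < 2*n \<Longrightarrow> (\<Sum>j<2*n. Qf n k j * h j) = hold n k * h k + (1 - hold n k) * h (cnext n k)"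
  unfolding Qf_def using sum_two_points[of k "2*n" "cnext n k" "hold n k" "1 - hold n k" h] cnext_neq[of n k] by simp

lemma Qb_row: "n \<ge> 1 \<Longrightarrow> k < 2*n \<Longrightarrow> (\<Sum>j<2*n. Qb n k j * h j) = hold_back n k * h k + (1 - hold_back n k) * h (cprev n k)"
  unfolding Qb_def using sum_two_points[of k "2*n" "cprev n k" "hold_back n k" "1 - hold_back n k" h] cprev_neq[of n k] by simp

lemma Qf_col:
  assumes n: "n \<ge> 1" and k: "k < 2*n"
  shows "(\<Sum>j<2*n. M j * Qf n j k) = M k * hold n k + M (cprev n k) * (1 - hold n (cprev n k))"
proof -
  have "(\<Sum>j<2*n. M j * Qf n j k) = (\<Sum>j<2*n. (if k = j then M j * hold n j else 0) + (if cprev n k = j then M j * (1 - hold n j) else 0))"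
    using k cprev_neq[OF n k] by (intro sum.cong) (auto simp: Qf_def cnext_eq_iff)
  then show ?thesis using k cprev_neq[OF n k] by (simp add: sum.distrib)
qed

lemma Qb_col:
  assumes n: "n \<ge> 1" and k: "k < 2*n"
  shows "(\<Sum>j<2*n. M j * Qb n j k) = M k * hold_back n k + M (cnext n k) * (1 - hold_back n (cnext n k))"
proof -
  have "(\<Sum>j<2*n. M j * Qb n j k) = (\<Sum>j<2*n. (if k = j then M j * hold_back n j else 0) + (if cnext n k = j then M j * (1 - hold_back n j) else 0))"
    using k cnext_neq[OF n k] by (intro sum.cong) (auto simp: Qb_def cprev_eq_iff)
  then show ?thesis using k cnext_neq[OF n k] by (simp add: sum.distrib)
qed

lemma weight_balance:
  "n \<ge> 3 \<Longrightarrow> k < 2*n \<Longrightarrow> weight n k * hold n k + weight n (cprev n k) * (1 - hold n (cprev n k)) = weight n k"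
  by (auto simp: weight_def hold_def is_end_def cprev_def)

lemma weight_Qb_balance:
  "n \<ge> 3 \<Longrightarrow> a < 2*n \<Longrightarrow>
   weight n (cmirror n a) * hold_back n a + weight n (cmirror n (cnext n a)) * (1 - hold_back n (cnext n a))
   = weight n (cmirror n a)"
  using weight_balance[of n "cmirror n a"] by (simp add: hold_back_def cmirror_cnext)

lemma weight_Qb_stationary:
  "n \<ge> 3 \<Longrightarrow> k < 2*n \<Longrightarrow> (\<Sum>j<2*n. weight n (cmirror n j) * Qb n j k) = weight n (cmirror n k)"
  using Qb_col[of n k "\<lambda>j. weight n (cmirror n j)"] weight_Qb_balance[of n k] by simp

section \<open>Two walkers on the cycle: the meeting estimate\<close>

definition ahead :: "nat \<Rightarrow> nat \<Rightarrow> nat \<Rightarrow> nat" where "ahead n k d = (k + d) mod (2*n)"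

lemma ahead_lt: "n \<ge> 1 \<Longrightarrow> ahead n k d < 2*n" by (simp add: ahead_def)

lemma ahead_Suc: "n \<ge> 1 \<Longrightarrow> ahead n k (d+1) = cnext n (ahead n k d)"
  by (simp add: ahead_def cnext_def mod_Suc)

lemma ahead_cprev_Suc: "n \<ge> 1 \<Longrightarrow> k < 2*n \<Longrightarrow> ahead n (cprev n k) (d+1) = ahead n k d"
proof -
  assume n: "n \<ge> 1" and k: "k < 2*n"
  show ?thesis
  proof (cases "k = 0")
    case True
    have e: "cprev n k + (d+1) = d + 2*n" using True n by (simp add: cprev_def)
    have "ahead n (cprev n k) (d+1) = (d + 2*n) mod (2*n)" unfolding ahead_def e ..
    then show ?thesis using True by (simp add: ahead_def)
  next
    case False
    then have e: "cprev n k + (d+1) = k + d" by (simp add: cprev_def)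
    show ?thesis unfolding ahead_def e ..
  qed
qed

lemma ahead_cprev_Suc2: "n \<ge> 1 \<Longrightarrow> k < 2*n \<Longrightarrow> ahead n (cprev n k) (d+2) = cnext n (ahead n k d)"
  using ahead_cprev_Suc[of n k "d+1"] ahead_Suc[of n k d] by simp

lemma ahead_pred: "n \<ge> 1 \<Longrightarrow> d \<ge> 1 \<Longrightarrow> ahead n k (d - 1) = cprev n (ahead n k d)"
proof -
  assume n: "n \<ge> 1" and d: "d \<ge> 1"
  have "ahead n k d = cnext n (ahead n k (d - 1))" using ahead_Suc[OF n, of k "d-1"] d by simp
  then show ?thesis using ahead_lt[OF n] by simp
qed

lemma ahead_cnext_pred: "n \<ge> 1 \<Longrightarrow> k < 2*n \<Longrightarrow> d \<ge> 1 \<Longrightarrow> ahead n (cnext n k) (d - 1) = ahead n k d"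
  using ahead_cprev_Suc[OF _ cnext_lt, of n k "d-1"] by simp

lemma ahead_1: "n \<ge> 1 \<Longrightarrow> k < 2*n \<Longrightarrow> ahead n k 1 = cnext n k"
  using ahead_Suc[of n k 0] by (simp add: ahead_def)

lemma bij_ahead:
  assumes n: "n \<ge> 1" and x: "x < 2*n"
  shows "bij_betw (ahead n x) {2*n+1..4*n} {..<2*n}"
proof -
  have inj: "inj_on (ahead n x) {2*n+1..4*n}"
  proof (rule inj_onI)
    fix d1 d2 assume d1: "d1 \<in> {2*n+1..4*n}" and d2: "d2 \<in> {2*n+1..4*n}" and e: "ahead n x d1 = ahead n x d2"
    show "d1 = d2"
    proof (rule ccontr)
      assume ne: "d1 \<noteq> d2"
      { fix a b assume ab: "a \<in> {2*n+1..4*n}" "b \<in> {2*n+1..4*n}" "a < b" "(x + a) mod (2*n) = (x + b) mod (2*n)"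
        then have "(2*n) dvd ((x+b) - (x+a))" using mod_eq_dvd_iff_nat[of "x+a" "x+b" "2*n"] by simp
        moreover have "(x+b) - (x+a) < 2*n" "0 < (x+b) - (x+a)" using ab by auto
        ultimately have False using nat_dvd_not_less by blast }
      note H = this
      show False
      proof (cases "d1 < d2")
        case True then show False using H[of d1 d2] d1 d2 e by (auto simp: ahead_def)
      next
        case False then have "d2 < d1" using ne by simp
        then show False using H[of d2 d1] d1 d2 e by (auto simp: ahead_def)
      qed
    qed
  qed
  have sub: "ahead n x ` {2*n+1..4*n} \<subseteq> {..<2*n}" using ahead_lt[OF n] by auto
  have "card (ahead n x ` {2*n+1..4*n}) = 2*n" using card_image[OF inj] by simp
  then have "ahead n x ` {2*n+1..4*n} = {..<2*n}"
    using sub by (intro card_subset_eq) auto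
  then show ?thesis using inj by (simp add: bij_betw_def)
qed

text \<open>
  A forward walker X (kernel Qf) and a backward walker Y (kernel Qb) move
  independently; the state is the pair (k, d) where k is the position of X and Y sits d steps
  ahead of X, 1 \<le> d \<le> 4n.  In one step d decreases by 0, 1 or 2; transitions that would
  make d < 1 (the walkers meet or cross) are killed.  gap_step is the one-step kernel and
  gap_dist n x s the (sub-probability) mass after s steps, started from X = x and from all
  gaps d in (2n, 4n], i.e. from every position of Y exactly once.
\<close>

definition gap_step :: "nat \<Rightarrow> nat \<Rightarrow> nat \<Rightarrow> nat \<Rightarrow> nat \<Rightarrow> real" where
  "gap_step n k d k' d' =
     (if k' = k \<and> d' = d then hold n k * hold_back n (ahead n k d) else 0)
   + (if k' = k \<and> d' + 1 = d then hold n k * (1 - hold_back n (ahead n k d)) else 0)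
   + (if k' = cnext n k \<and> d' + 1 = d then (1 - hold n k) * hold_back n (ahead n k d) else 0)
   + (if k' = cnext n k \<and> d' + 2 = d then (1 - hold n k) * (1 - hold_back n (ahead n k d)) else 0)"

fun gap_dist :: "nat \<Rightarrow> nat \<Rightarrow> nat \<Rightarrow> nat \<Rightarrow> nat \<Rightarrow> real" where
  "gap_dist n x 0 k d = (if k = x \<and> 2*n+1 \<le> d \<and> d \<le> 4*n then 1 else 0)"
| "gap_dist n x (Suc s) k' d' = (\<Sum>k<2*n. \<Sum>d\<in>{1..4*n}. gap_dist n x s k d * gap_step n k d k' d')"

lemma gap_step_nonneg: "0 \<le> gap_step n k d k' d'"
  using hold_le[of n k] hold_nonneg[of n k] hold_back_le[of n "ahead n k d"] hold_back_nonneg[of n "ahead n k d"]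
  by (simp add: gap_step_def)

lemma gap_dist_nonneg: "0 \<le> gap_dist n x s k d"
  by (induction s arbitrary: k d) (auto intro!: sum_nonneg mult_nonneg_nonneg gap_step_nonneg)

lemma sum_kronecker_pull:
  assumes "b < 2*(n::nat)" "\<And>k. k < 2*n \<Longrightarrow> (k' = g k) = (k = b)"
  shows "(\<Sum>k<2*n. \<Sum>d\<in>{1..4*n}. F k d * (if k' = g k \<and> d' + e = d then w k d else 0))
        = (if d' + e \<in> {1..4*n} then F b (d'+e) * w b (d'+e) else (0::real))"
proof -
  have r: "F k d * (if k' = g k \<and> d' + e = d then w k d else 0)
     = (if k' = g k then (if d' + e = d then F k d * w k d else 0) else 0)" for k d by simp
  have "(\<Sum>k<2*n. \<Sum>d\<in>{1..4*n}. F k d * (if k' = g k \<and> d' + e = d then w k d else 0))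
      = (\<Sum>k<2*n. if k' = g k then (\<Sum>d\<in>{1..4*n}. if d' + e = d then F k d * w k d else 0) else 0)"
    unfolding r by (intro sum.cong refl) (simp split: if_split)
  also have "\<dots> = (\<Sum>k<2*n. if b = k then (\<Sum>d\<in>{1..4*n}. if d' + e = d then F k d * w k d else 0) else 0)"
    using assms(2) by (intro sum.cong) auto
  also have "\<dots> = (\<Sum>d\<in>{1..4*n}. if d' + e = d then F b d * w b d else 0)"
    using assms(1) by simp
  also have "\<dots> = (if d' + e \<in> {1..4*n} then F b (d'+e) * w b (d'+e) else 0)"
    by (rule sum.delta'[OF finite_atLeastAtMost])
  finally show ?thesis .
qed

lemma gap_dist_Suc:
  assumes n: "n \<ge> 1" and k': "k' < 2*n"
  shows "gap_dist n x (Suc s) k' d' =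
     (if d' \<in> {1..4*n} then gap_dist n x s k' d' * (hold n k' * hold_back n (ahead n k' d')) else 0)
   + (if d'+1 \<in> {1..4*n} then gap_dist n x s k' (d'+1) * (hold n k' * (1 - hold_back n (ahead n k' (d'+1)))) else 0)
   + (if d'+1 \<in> {1..4*n} then gap_dist n x s (cprev n k') (d'+1) * ((1 - hold n (cprev n k')) * hold_back n (ahead n (cprev n k') (d'+1))) else 0)
   + (if d'+2 \<in> {1..4*n} then gap_dist n x s (cprev n k') (d'+2) * ((1 - hold n (cprev n k')) * (1 - hold_back n (ahead n (cprev n k') (d'+2)))) else 0)"
proof -
  let ?F = "gap_dist n x s"
  have e: "\<And>k d. gap_step n k d k' d' =
     (if k' = id k \<and> d' + 0 = d then hold n k * hold_back n (ahead n k d) else 0)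
   + (if k' = id k \<and> d' + 1 = d then hold n k * (1 - hold_back n (ahead n k d)) else 0)
   + (if k' = cnext n k \<and> d' + 1 = d then (1 - hold n k) * hold_back n (ahead n k d) else 0)
   + (if k' = cnext n k \<and> d' + 2 = d then (1 - hold n k) * (1 - hold_back n (ahead n k d)) else 0)"
    by (simp add: gap_step_def)
  have i1: "\<And>k. k < 2*n \<Longrightarrow> (k' = id k) = (k = k')" by auto
  have i2: "\<And>k. k < 2*n \<Longrightarrow> (k' = cnext n k) = (k = cprev n k')" using k' by (simp add: cnext_eq_iff)
  have "gap_dist n x (Suc s) k' d' =
      (\<Sum>k<2*n. \<Sum>d\<in>{1..4*n}. ?F k d * (if k' = id k \<and> d' + 0 = d then hold n k * hold_back n (ahead n k d) else 0))
    + (\<Sum>k<2*n. \<Sum>d\<in>{1..4*n}. ?F k d * (if k' = id k \<and> d' + 1 = d then hold n k * (1 - hold_back n (ahead n k d)) else 0))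
    + (\<Sum>k<2*n. \<Sum>d\<in>{1..4*n}. ?F k d * (if k' = cnext n k \<and> d' + 1 = d then (1 - hold n k) * hold_back n (ahead n k d) else 0))
    + (\<Sum>k<2*n. \<Sum>d\<in>{1..4*n}. ?F k d * (if k' = cnext n k \<and> d' + 2 = d then (1 - hold n k) * (1 - hold_back n (ahead n k d)) else 0))"
    by (simp only: gap_dist.simps e distrib_left sum.distrib)
  then show ?thesis
    by (simp only: sum_kronecker_pull[OF k' i1] sum_kronecker_pull[OF cprev_lt[OF k'] i2]) simp
qed

text \<open>
  For \<mu> \<ge> 1, gap_dist(s,k,d) \<mu>^d is bounded by the product of a tilted
  forward walk tilt_fwd (each forward step is discounted by 1/\<mu>) and a tilted backward walk
  tilt_bwd (started from \<mu>^(4n)).  With \<mu> = 1 this bounds gap_dist by the walks themselves;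
  with \<mu> = 2 it is a Chernoff bound showing that the gap rarely survives 8n steps.
\<close>

fun tilt_fwd :: "real \<Rightarrow> nat \<Rightarrow> nat \<Rightarrow> nat \<Rightarrow> nat \<Rightarrow> real" where
  "tilt_fwd \<mu> n x 0 k = (if k = x then 1 else 0)"
| "tilt_fwd \<mu> n x (Suc s) k = tilt_fwd \<mu> n x s k * hold n k + tilt_fwd \<mu> n x s (cprev n k) * (1 - hold n (cprev n k)) / \<mu>"

fun tilt_bwd :: "real \<Rightarrow> nat \<Rightarrow> nat \<Rightarrow> nat \<Rightarrow> real" where
  "tilt_bwd \<mu> n 0 a = \<mu> ^ (4*n)"
| "tilt_bwd \<mu> n (Suc s) a = tilt_bwd \<mu> n s a * hold_back n a + tilt_bwd \<mu> n s (cnext n a) * (1 - hold_back n (cnext n a)) / \<mu>"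

lemma tilt_fwd_nonneg: "\<mu> > 0 \<Longrightarrow> 0 \<le> tilt_fwd \<mu> n x s k"
  by (induction s arbitrary: k) (auto intro!: add_nonneg_nonneg mult_nonneg_nonneg divide_nonneg_pos hold_compl_nonneg hold_nonneg)

lemma tilt_bwd_nonneg: "\<mu> > 0 \<Longrightarrow> 0 \<le> tilt_bwd \<mu> n s a"
  by (induction s arbitrary: a) (auto intro!: add_nonneg_nonneg mult_nonneg_nonneg divide_nonneg_pos hold_back_compl_nonneg hold_back_nonneg)

lemma tilt_term_bound:
  assumes "\<mu> \<ge> 1" "0 \<le> c" "gap_dist n x s k d' * \<mu> ^ d' \<le> B" "d' = d + e"
  shows "(if d' \<in> {1..4*n} then gap_dist n x s k d' * c else 0) * \<mu> ^ d \<le> B * c / \<mu> ^ e"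
proof -
  have mp: "\<mu> ^ e > 0" using assms(1) by simp
  have "gap_dist n x s k d' * c * \<mu> ^ d = (gap_dist n x s k d' * \<mu> ^ d') * c / \<mu> ^ e"
    using assms(4) assms(1) mp by (simp add: power_add)
  also have "\<dots> \<le> B * c / \<mu> ^ e"
    using assms(2,3) mp by (intro divide_right_mono mult_right_mono) auto
  finally have "gap_dist n x s k d' * c * \<mu> ^ d \<le> B * c / \<mu> ^ e" .
  moreover have "0 \<le> B * c / \<mu> ^ e"
  proof -
    have "0 \<le> gap_dist n x s k d' * \<mu> ^ d'" using gap_dist_nonneg[of n x s k d'] assms(1) by simp
    then have "0 \<le> B" using assms(3) by linarith
    then show ?thesis using assms(2) mp by simp
  qed
  ultimately show ?thesis by auto
qed

text \<open>The tilted bound, by induction on the time s; the four predecessor terms factor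
  into one step of tilt_fwd times one step of tilt_bwd.\<close>

lemma gap_dist_tilt_bound:
  assumes mu: "\<mu> \<ge> 1" and n: "n \<ge> 1" and k: "k < 2*n"
  shows "gap_dist n x s k d * \<mu> ^ d \<le> tilt_fwd \<mu> n x s k * tilt_bwd \<mu> n s (ahead n k d)"
  using k
proof (induction s arbitrary: k d)
  case 0
  show ?case
  proof (cases "k = x \<and> 2*n+1 \<le> d \<and> d \<le> 4*n")
    case True
    then have "\<mu> ^ d \<le> \<mu> ^ (4*n)" using mu by (intro power_increasing) auto
    then show ?thesis using True by simp
  next
    case False
    then show ?thesis using tilt_fwd_nonneg[of \<mu>] tilt_bwd_nonneg[of \<mu>] mu by auto
  qed
next
  case (Suc s)
  let ?a = "ahead n k d"
  let ?X = "tilt_fwd \<mu> n x s" and ?Y = "tilt_bwd \<mu> n s"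
  have pk: "cprev n k < 2*n" using Suc.prems by simp
  have mp: "\<mu> > 0" using mu by simp
  have q1: "0 \<le> hold n k * hold_back n ?a" "0 \<le> hold n k * (1 - hold_back n (ahead n k (d+1)))"
    "0 \<le> (1 - hold n (cprev n k)) * hold_back n (ahead n (cprev n k) (d+1))"
    "0 \<le> (1 - hold n (cprev n k)) * (1 - hold_back n (ahead n (cprev n k) (d+2)))"
    by (auto intro!: mult_nonneg_nonneg hold_compl_nonneg hold_back_compl_nonneg hold_nonneg hold_back_nonneg)
  have "gap_dist n x (Suc s) k d * \<mu> ^ d \<le>
      ?X k * ?Y ?a * (hold n k * hold_back n ?a) / \<mu> ^ 0
    + ?X k * ?Y (ahead n k (d+1)) * (hold n k * (1 - hold_back n (ahead n k (d+1)))) / \<mu> ^ 1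
    + ?X (cprev n k) * ?Y (ahead n (cprev n k) (d+1)) * ((1 - hold n (cprev n k)) * hold_back n (ahead n (cprev n k) (d+1))) / \<mu> ^ 1
    + ?X (cprev n k) * ?Y (ahead n (cprev n k) (d+2)) * ((1 - hold n (cprev n k)) * (1 - hold_back n (ahead n (cprev n k) (d+2)))) / \<mu> ^ 2"
    unfolding gap_dist_Suc[OF n Suc.prems] distrib_right using pk Suc.prems
    by (intro add_mono tilt_term_bound[OF mu] Suc.IH q1) simp_all
  also have "\<dots> = (?X k * hold n k + ?X (cprev n k) * (1 - hold n (cprev n k)) / \<mu>) *
                  (?Y ?a * hold_back n ?a + ?Y (cnext n ?a) * (1 - hold_back n (cnext n ?a)) / \<mu>)"
    unfolding ahead_cprev_Suc2[OF n Suc.prems] unfolding ahead_cprev_Suc[OF n Suc.prems] unfolding ahead_Suc[OF n]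
    using mp by (simp add: field_simps power2_eq_square)
  also have "\<dots> = tilt_fwd \<mu> n x (Suc s) k * tilt_bwd \<mu> n (Suc s) ?a" by simp
  finally show ?case .
qed

lemma tilt_fwd_1: "n \<ge> 1 \<Longrightarrow> k < 2*n \<Longrightarrow> tilt_fwd 1 n x s k = matpow (2*n) (Qf n) s x k"
proof (induction s arbitrary: k)
  case 0 then show ?case by simp
next
  case (Suc s)
  have "matpow (2*n) (Qf n) (Suc s) x k = matpow (2*n) (Qf n) s x k * hold n k + matpow (2*n) (Qf n) s x (cprev n k) * (1 - hold n (cprev n k))"
    using Qf_col[OF Suc.prems, of "\<lambda>j. matpow (2*n) (Qf n) s x j"] by simp
  then show ?case using Suc by simp
qed

lemma tilt_bwd_1_le: "n \<ge> 3 \<Longrightarrow> a < 2*n \<Longrightarrow> tilt_bwd 1 n s a \<le> weight n (cmirror n a)"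
proof (induction s arbitrary: a)
  case 0 then show ?case using weight_ge1[of n] by simp
next
  case (Suc s)
  have s1: "cnext n a < 2*n" using Suc.prems by simp
  have "tilt_bwd 1 n (Suc s) a = tilt_bwd 1 n s a * hold_back n a + tilt_bwd 1 n s (cnext n a) * (1 - hold_back n (cnext n a))" by simp
  also have "\<dots> \<le> weight n (cmirror n a) * hold_back n a + weight n (cmirror n (cnext n a)) * (1 - hold_back n (cnext n a))"
    using Suc.IH[OF Suc.prems(1,2)] Suc.IH[OF Suc.prems(1) s1] hold_back_nonneg[of n] hold_back_compl_nonneg[of n]
    by (intro add_mono mult_right_mono) auto
  also have "\<dots> = weight n (cmirror n a)" using weight_Qb_balance Suc.prems by simp
  finally show ?case .
qed

text \<open>With \<mu> = 2 both tilted walks lose a factor 3/4 per step, since each walker moves with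
  probability at least 1/2 and a move is discounted by 1/2.\<close>

lemma tilt_bwd_2_le: "n \<ge> 3 \<Longrightarrow> a < 2*n \<Longrightarrow> tilt_bwd 2 n s a \<le> (3/4)^s * 2^(4*n) * weight n (cmirror n a)"
proof (induction s arbitrary: a)
  case 0 then show ?case using weight_ge1[of n "cmirror n a"] by simp
next
  case (Suc s)
  have s1: "cnext n a < 2*n" using Suc.prems by simp
  let ?c = "(3/4::real)^s * 2^(4*n)"
  have c0: "0 \<le> ?c" by simp
  have "tilt_bwd 2 n (Suc s) a = tilt_bwd 2 n s a * hold_back n a + tilt_bwd 2 n s (cnext n a) * (1 - hold_back n (cnext n a)) / 2" by simp
  also have "\<dots> \<le> ?c * weight n (cmirror n a) * hold_back n a + ?c * weight n (cmirror n (cnext n a)) * (1 - hold_back n (cnext n a)) / 2"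
    using Suc.IH[OF Suc.prems(1,2)] Suc.IH[OF Suc.prems(1) s1] hold_back_nonneg[of n] hold_back_compl_nonneg[of n]
    by (intro add_mono mult_right_mono divide_right_mono) auto
  also have "\<dots> = ?c * (weight n (cmirror n a) * hold_back n a + weight n (cmirror n (cnext n a)) * (1 - hold_back n (cnext n a)) / 2)"
    by (simp add: algebra_simps)
  also have "weight n (cmirror n (cnext n a)) * (1 - hold_back n (cnext n a)) = weight n (cmirror n a) * (1 - hold_back n a)"
    using weight_Qb_balance[OF Suc.prems] by (simp add: algebra_simps)
  also have "?c * (weight n (cmirror n a) * hold_back n a + weight n (cmirror n a) * (1 - hold_back n a) / 2) \<le> ?c * (3/4 * weight n (cmirror n a))"
  proof (intro mult_left_mono c0)
    have "hold_back n a * weight n (cmirror n a) \<le> (1/2) * weight n (cmirror n a)"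
      using hold_back_le[of n a] weight_ge1[of n "cmirror n a"] by (intro mult_right_mono) auto
    moreover have "weight n (cmirror n a) * hold_back n a + weight n (cmirror n a) * (1 - hold_back n a) / 2
       = weight n (cmirror n a) / 2 + (hold_back n a * weight n (cmirror n a)) / 2" by (simp add: field_simps)
    ultimately show "weight n (cmirror n a) * hold_back n a + weight n (cmirror n a) * (1 - hold_back n a) / 2 \<le> 3/4 * weight n (cmirror n a)"
      by linarith
  qed
  also have "\<dots> = (3/4)^(Suc s) * 2^(4*n) * weight n (cmirror n a)" by simp
  finally show ?case .
qed

lemma tilt_fwd_2_sum: "n \<ge> 1 \<Longrightarrow> (\<Sum>k<2*n. tilt_fwd 2 n x s k) \<le> (3/4)^s"
proof (induction s)
  case 0 then show ?case by (simp add: sum.If_cases)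
next
  case (Suc s)
  have "(\<Sum>k<2*n. tilt_fwd 2 n x (Suc s) k) = (\<Sum>k<2*n. tilt_fwd 2 n x s k * hold n k) + (\<Sum>k<2*n. tilt_fwd 2 n x s (cprev n k) * (1 - hold n (cprev n k)) / 2)"
    by (simp add: sum.distrib)
  also have "(\<Sum>k<2*n. tilt_fwd 2 n x s (cprev n k) * (1 - hold n (cprev n k)) / 2) = (\<Sum>k<2*n. tilt_fwd 2 n x s k * (1 - hold n k) / 2)"
    by (rule sum_reindex_cprev)
  also have "(\<Sum>k<2*n. tilt_fwd 2 n x s k * hold n k) + (\<Sum>k<2*n. tilt_fwd 2 n x s k * (1 - hold n k) / 2)
      = (\<Sum>k<2*n. tilt_fwd 2 n x s k * ((1 + hold n k)/2))"
    by (simp add: sum.distrib[symmetric] field_simps)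
  also have "\<dots> \<le> (\<Sum>k<2*n. tilt_fwd 2 n x s k * (3/4))"
    using tilt_fwd_nonneg[of 2 n x s] by (intro sum_mono mult_left_mono) (auto simp: hold_def)
  also have "\<dots> = (3/4) * (\<Sum>k<2*n. tilt_fwd 2 n x s k)" by (simp add: sum_distrib_left mult.commute)
  also have "\<dots> \<le> (3/4)^(Suc s)" using Suc by simp
  finally show ?case .
qed

lemma sum_kronecker_push:
  assumes "gk < 2*(n::nat)"
  shows "(\<Sum>k'<2*n. \<Sum>d'\<in>{1..4*n}. (if k' = gk \<and> d' + e = d then c else 0) * H k' d')
        = (if e \<le> d \<and> d - e \<in> {1..4*n} then c * H gk (d - e) else (0::real))"
proof -
  have r: "(if k' = gk \<and> d' + e = d then c else 0) * H k' d'
     = (if gk = k' then (if d - e = d' \<and> e \<le> d then c * H k' d' else 0) else 0)" for k' d' by auto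
  have "(\<Sum>k'<2*n. \<Sum>d'\<in>{1..4*n}. (if k' = gk \<and> d' + e = d then c else 0) * H k' d')
     = (\<Sum>k'<2*n. if gk = k' then (\<Sum>d'\<in>{1..4*n}. if d - e = d' \<and> e \<le> d then c * H k' d' else 0) else 0)"
    unfolding r by (intro sum.cong refl) (simp split: if_split)
  also have "\<dots> = (\<Sum>d'\<in>{1..4*n}. if d - e = d' \<and> e \<le> d then c * H gk d' else 0)"
    using assms by simp
  also have "\<dots> = (\<Sum>d'\<in>{1..4*n}. if d - e = d' then (if e \<le> d then c * H gk d' else 0) else 0)"
    by (rule sum.cong) auto
  also have "\<dots> = (if d - e \<in> {1..4*n} then (if e \<le> d then c * H gk (d-e) else 0) else 0)"
    by (rule sum.delta'[OF finite_atLeastAtMost])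
  finally show ?thesis by auto
qed

lemma end_run: "n \<ge> 3 \<Longrightarrow> k < 2*n \<Longrightarrow> is_end n k \<Longrightarrow>
   \<not> is_end n (cprev n k) \<or> (is_end n (cprev n k) \<and> \<not> is_end n (cprev n (cprev n k)))"
  by (auto simp: is_end_def cprev_def)

lemma linear_le_pow6: "n \<ge> 3 \<Longrightarrow> 32 * real n \<le> 6 ^ n"
proof (induction n rule: nat_induct_at_least)
  case base then show ?case by simp
next
  case (Suc m)
  have "32 * real (Suc m) \<le> 6 * (32 * real m)" using Suc by simp
  also have "\<dots> \<le> 6 * 6 ^ m" using Suc by simp
  finally show ?case by simp
qed

lemma chernoff_numeric:
  assumes n3: "n \<ge> 3"
  shows "(3/4::real)^(8*n) * (4 * real n * ((3/4)^(8*n) * 2^(4*n))) \<le> 1/8"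
proof -
  have "(3/4::real)^(8*n) * (4 * real n * ((3/4)^(8*n) * 2^(4*n))) = 4 * real n * (((3/4::real)^16 * 16) ^ n)"
  proof -
    have e1: "(3/4::real)^(8*n) * (3/4)^(8*n) = ((3/4)^16)^n"
      by (simp add: power_add[symmetric] power_mult[symmetric] mult.commute)
    have e2: "(2::real)^(4*n) = 16^n" by (simp add: power_mult)
    have "(3/4::real)^(8*n) * (4 * real n * ((3/4)^(8*n) * 2^(4*n)))
        = 4 * real n * (((3/4::real)^(8*n) * (3/4)^(8*n)) * 2^(4*n))" by (simp add: algebra_simps)
    then show ?thesis by (simp only: e1 e2 power_mult_distrib)
  qed
  also have "\<dots> \<le> 4 * real n * ((1/6) ^ n)"
  proof -
    have "(3/4::real)^16 * 16 \<le> 1/6" by (simp add: power_divide)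
    then show ?thesis by (intro mult_left_mono power_mono) auto
  qed
  also have "\<dots> \<le> 1/8"
    using linear_le_pow6[OF n3] by (simp add: power_one_over field_simps)
  finally show ?thesis .
qed

lemma gap_step_sum:
  assumes k: "k < 2*n"
  shows "(\<Sum>k'<2*n. \<Sum>d'\<in>{1..4*n}. gap_step n k d k' d' * H k' d')
     = (if d \<in> {1..4*n} then hold n k * hold_back n (ahead n k d) * H k d else 0)
     + (if 1 \<le> d \<and> d - 1 \<in> {1..4*n} then hold n k * (1 - hold_back n (ahead n k d)) * H k (d - 1) else 0)
     + (if 1 \<le> d \<and> d - 1 \<in> {1..4*n} then (1 - hold n k) * hold_back n (ahead n k d) * H (cnext n k) (d - 1) else 0)
     + (if 2 \<le> d \<and> d - 2 \<in> {1..4*n} then (1 - hold n k) * (1 - hold_back n (ahead n k d)) * H (cnext n k) (d - 2) else 0)"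
proof -
  let ?a = "ahead n k d"
  have e: "gap_step n k d k' d' * H k' d' =
       (if k' = k \<and> d' + 0 = d then hold n k * hold_back n ?a else 0) * H k' d'
     + (if k' = k \<and> d' + 1 = d then hold n k * (1 - hold_back n ?a) else 0) * H k' d'
     + (if k' = cnext n k \<and> d' + 1 = d then (1 - hold n k) * hold_back n ?a else 0) * H k' d'
     + (if k' = cnext n k \<and> d' + 2 = d then (1 - hold n k) * (1 - hold_back n ?a) else 0) * H k' d'"
    for k' d' by (simp add: gap_step_def distrib_right)
  show ?thesis
    by (simp only: e sum.distrib sum_kronecker_push[OF k] sum_kronecker_push[OF cnext_lt[OF k]]) simp
qed

lemma sum_swap_pairs:
  "(\<Sum>a\<in>A. \<Sum>b\<in>B. \<Sum>c\<in>C. \<Sum>d\<in>D. f a b c d) = (\<Sum>c\<in>C. \<Sum>d\<in>D. \<Sum>a\<in>A. \<Sum>b\<in>B. f a b c d)"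
proof -
  have "(\<Sum>a\<in>A. \<Sum>b\<in>B. \<Sum>c\<in>C. \<Sum>d\<in>D. f a b c d) = (\<Sum>a\<in>A. \<Sum>c\<in>C. \<Sum>b\<in>B. \<Sum>d\<in>D. f a b c d)"
    by (rule sum.cong[OF refl], rule sum.swap)
  also have "\<dots> = (\<Sum>c\<in>C. \<Sum>a\<in>A. \<Sum>b\<in>B. \<Sum>d\<in>D. f a b c d)" by (rule sum.swap)
  also have "\<dots> = (\<Sum>c\<in>C. \<Sum>a\<in>A. \<Sum>d\<in>D. \<Sum>b\<in>B. f a b c d)"
    by (rule sum.cong[OF refl], rule sum.cong[OF refl], rule sum.swap)
  also have "\<dots> = (\<Sum>c\<in>C. \<Sum>d\<in>D. \<Sum>a\<in>A. \<Sum>b\<in>B. f a b c d)"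
    by (rule sum.cong[OF refl], rule sum.swap)
  finally show ?thesis .
qed

text \<open>
  The meeting estimate, for a forward walker started at x and a backward walker required to
  end at z at the horizon 8n.  back s a = Qb^(horizon - s)(a, z) is the probability that the
  backward walker, at position a at time s, is at z at the horizon; surv s is the surviving
  (not yet met) mass of the gap process, weighted by back.  It decreases from at least 1/2
  to at most 1/8, and the mass lost in each step (exit_loss) is controlled by the probability
  that the two walkers occupy the same position.
\<close>

locale meeting =
  fixes n x z :: nat
  assumes n3: "n \<ge> 3" and xl: "x < 2*n" and zl: "z < 2*n"
begin

definition "horizon = 8*n"
definition "back s a = matpow (2*n) (Qb n) (horizon - s) a z"
definition "surv s = (\<Sum>k<2*n. \<Sum>d\<in>{1..4*n}. gap_dist n x s k d * back s (ahead n k d))"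

text \<open>Killed mass, weighted by back, from gap 1 and from gap 2.\<close>

definition "exit1 s k = hold n k * (1 - hold_back n (ahead n k 1)) * back (Suc s) (cprev n (ahead n k 1))
   + (1 - hold n k) * hold_back n (ahead n k 1) * back (Suc s) (ahead n k 1)
   + (1 - hold n k) * (1 - hold_back n (ahead n k 1)) * back (Suc s) (cprev n (ahead n k 1))"
definition "exit2 s k = (1 - hold n k) * (1 - hold_back n (ahead n k 2)) * back (Suc s) (cprev n (ahead n k 2))"
definition "exit_loss s k d = (if d = 1 then exit1 s k else if d = 2 then exit2 s k else 0)"

lemma n_pos: "n \<ge> 1" using n3 by simp

lemma back_nonneg: "a < 2*n \<Longrightarrow> 0 \<le> back s a"
  unfolding back_def using zl by (intro matpow_nonneg) (auto simp: Qb_nonneg)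

lemma back_step: "s < horizon \<Longrightarrow> a < 2*n \<Longrightarrow> back s a = hold_back n a * back (Suc s) a + (1 - hold_back n a) * back (Suc s) (cprev n a)"
proof -
  assume s: "s < horizon" and a: "a < 2*n"
  have "horizon - s = Suc (horizon - Suc s)" using s by simp
  then have "back s a = (\<Sum>j<2*n. Qb n a j * back (Suc s) j)"
    unfolding back_def using matpow_Suc_left[OF a zl] by simp
  then show ?thesis using Qb_row[OF n_pos a] by simp
qed

lemma gap_step_back:
  assumes k: "k < 2*n" and d: "d \<in> {1..4*n}"
  shows "(\<Sum>k'<2*n. \<Sum>d'\<in>{1..4*n}. gap_step n k d k' d' * back (Suc s) (ahead n k' d'))
     = hold_back n (ahead n k d) * back (Suc s) (ahead n k d)
       + (1 - hold_back n (ahead n k d)) * back (Suc s) (cprev n (ahead n k d)) - exit_loss s k d"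
proof -
  let ?a = "ahead n k d"
  have d1: "d \<ge> 1" "d \<le> 4*n" using d by auto
  have m1: "d \<ge> 2 \<Longrightarrow> ahead n k (d - 1) = cprev n ?a" using ahead_pred[OF n_pos] by simp
  have m2: "d \<ge> 2 \<Longrightarrow> ahead n (cnext n k) (d - 1) = ?a" using ahead_cnext_pred[OF n_pos k] by simp
  have m3: "d \<ge> 3 \<Longrightarrow> ahead n (cnext n k) (d - 2) = cprev n ?a"
    using ahead_cnext_pred[OF n_pos k, of "d-1"] ahead_pred[OF n_pos, of d k]
    by (simp add: diff_diff_add numeral_2_eq_2)
  consider "d = 1" | "d = 2" | "d \<ge> 3" using d1 by linarith
  then show ?thesis
  proof cases
    case 1
    then show ?thesis unfolding gap_step_sum[OF k]
      using n_pos by (simp add: exit_loss_def exit1_def algebra_simps)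
  next
    case 2
    then show ?thesis unfolding gap_step_sum[OF k]
      using d1 m1 m2 by (simp add: exit_loss_def exit2_def algebra_simps)
  next
    case 3
    then have "1 \<le> d - 2" "d - 2 \<le> 4*n" "1 \<le> d - 1" "d - 1 \<le> 4*n" using d1 by auto
    then show ?thesis unfolding gap_step_sum[OF k]
      using 3 d1 m1 m2 m3 by (simp add: exit_loss_def algebra_simps)
  qed
qed

lemma exit_loss_sum:
  "(\<Sum>d\<in>{1..4*n}. gap_dist n x s k d * exit_loss s k d) = gap_dist n x s k 1 * exit1 s k + gap_dist n x s k 2 * exit2 s k"
proof -
  have "(\<Sum>d\<in>{1..4*n}. gap_dist n x s k d * exit_loss s k d)
      = (\<Sum>d\<in>{1..4*n}. (if 1 = d then gap_dist n x s k d * exit1 s k else 0) + (if 2 = d then gap_dist n x s k d * exit2 s k else 0))"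
    by (rule sum.cong) (auto simp: exit_loss_def)
  then show ?thesis using n3 by (simp add: sum.distrib)
qed

lemma surv_step:
  assumes s: "s < horizon"
  shows "surv s = surv (Suc s) + (\<Sum>k<2*n. gap_dist n x s k 1 * exit1 s k + gap_dist n x s k 2 * exit2 s k)"
proof -
  let ?R = "{1..4*n}" and ?g = "gap_dist n x s"
  have "surv (Suc s) = (\<Sum>k'<2*n. \<Sum>d'\<in>?R. \<Sum>k<2*n. \<Sum>d\<in>?R. ?g k d * (gap_step n k d k' d' * back (Suc s) (ahead n k' d')))"
    by (simp add: surv_def sum_distrib_right mult.assoc)
  also have "\<dots> = (\<Sum>k<2*n. \<Sum>d\<in>?R. ?g k d * (\<Sum>k'<2*n. \<Sum>d'\<in>?R. gap_step n k d k' d' * back (Suc s) (ahead n k' d')))"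
    by (subst sum_swap_pairs) (simp only: sum_distrib_left)
  also have "\<dots> = (\<Sum>k<2*n. \<Sum>d\<in>?R. ?g k d * back s (ahead n k d) - ?g k d * exit_loss s k d)"
  proof (intro sum.cong refl)
    fix k d assume "k \<in> {..<2*n}" and d: "d \<in> ?R"
    then have k: "k < 2*n" by simp
    show "?g k d * (\<Sum>k'<2*n. \<Sum>d'\<in>?R. gap_step n k d k' d' * back (Suc s) (ahead n k' d'))
        = ?g k d * back s (ahead n k d) - ?g k d * exit_loss s k d"
      unfolding gap_step_back[OF k d] back_step[OF s ahead_lt[OF n_pos]] by (simp add: right_diff_distrib)
  qed
  also have "\<dots> = surv s - (\<Sum>k<2*n. \<Sum>d\<in>?R. ?g k d * exit_loss s k d)"
    by (simp add: surv_def sum_subtractf)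
  also have "\<dots> = surv s - (\<Sum>k<2*n. ?g k 1 * exit1 s k + ?g k 2 * exit2 s k)"
    by (simp only: exit_loss_sum)
  finally show ?thesis by simp
qed

text \<open>At an end position k the forward walker cannot hold, so the gap-process mass at k is
  dominated by the mass one step behind, with the gap one larger.\<close>

lemma gap_dist_end_le:
  assumes k: "k < 2*n" and sk: "is_end n k" and npk: "\<not> is_end n (cprev n k)"
    and d1: "1 \<le> d" and d2: "d \<le> 2*n"
  shows "gap_dist n x s k d \<le> gap_dist n x s (cprev n k) (d+1)"
proof (cases s)
  case 0
  then show ?thesis using d2 gap_dist_nonneg[of n x 0 "cprev n k" "d+1"] by simp
next
  case (Suc s')
  let ?pk = "cprev n k"
  have pk: "?pk < 2*n" using k by simp
  have qk: "hold n k = 0" using sk by (simp add: hold_def)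
  have qpk: "hold n ?pk = 1/2" using npk by (simp add: hold_def)
  have r: "d \<in> {1..4*n}" "d+1 \<in> {1..4*n}" "d+2 \<in> {1..4*n}" "d+1+1 \<in> {1..4*n}" using d1 d2 n3 by auto
  let ?T3 = "gap_dist n x s' ?pk (d+1) * ((1 - hold n ?pk) * hold_back n (ahead n ?pk (d+1)))"
  let ?T4 = "gap_dist n x s' ?pk (d+2) * ((1 - hold n ?pk) * (1 - hold_back n (ahead n ?pk (d+2))))"
  have L: "gap_dist n x (Suc s') k d = ?T3 + ?T4"
    using gap_dist_Suc[OF n_pos k, of x s' d] r by (simp add: qk)
  let ?U3 = "gap_dist n x s' (cprev n ?pk) (d+1+1) * ((1 - hold n (cprev n ?pk)) * hold_back n (ahead n (cprev n ?pk) (d+1+1)))"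
  let ?U4 = "gap_dist n x s' (cprev n ?pk) (d+1+2) * ((1 - hold n (cprev n ?pk)) * (1 - hold_back n (ahead n (cprev n ?pk) (d+1+2))))"
  have R: "gap_dist n x (Suc s') ?pk (d+1) = ?T3 + ?T4 + ?U3 + (if d+1+2 \<in> {1..4*n} then ?U4 else 0)"
    using gap_dist_Suc[OF n_pos pk, of x s' "d+1"] r by (simp add: qpk add.assoc)
  have "0 \<le> ?U3" "0 \<le> ?U4"
    by (auto intro!: mult_nonneg_nonneg gap_dist_nonneg hold_compl_nonneg hold_back_compl_nonneg hold_back_nonneg)
  then show ?thesis using L R Suc by auto
qed

lemma gap_dist_double_end_le:
  assumes k: "k < 2*n" and sk: "is_end n k" and spk: "is_end n (cprev n k)"
    and nppk: "\<not> is_end n (cprev n (cprev n k))"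
  shows "gap_dist n x s k 1 \<le> 2 * gap_dist n x s (cprev n k) 2"
proof (cases s)
  case 0
  then show ?thesis using gap_dist_nonneg[of n x 0 "cprev n k" 2] n3 by simp
next
  case (Suc s')
  let ?pk = "cprev n k" and ?ppk = "cprev n (cprev n k)"
  have pk: "?pk < 2*n" using k by simp
  have qk: "hold n k = 0" using sk by (simp add: hold_def)
  have qpk: "hold n ?pk = 0" using spk by (simp add: hold_def)
  have qppk: "hold n ?ppk = 1/2" using nppk by (simp add: hold_def)
  have r: "1 \<in> {1..4*n}" "2 \<in> {1..4*n}" "3 \<in> {1..4*n}" "4 \<in> {1..4*n}" using n3 by auto
  have L: "gap_dist n x (Suc s') k 1 = gap_dist n x s' ?pk 2 * hold_back n (ahead n ?pk 2) + gap_dist n x s' ?pk 3 * (1 - hold_back n (ahead n ?pk 3))"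
    using gap_dist_Suc[OF n_pos k, of x s' 1] r by (simp add: qk qpk numeral_3_eq_3 numeral_2_eq_2)
  have R: "gap_dist n x (Suc s') ?pk 2 = gap_dist n x s' ?ppk 3 * (1/2 * hold_back n (ahead n ?ppk 3)) + gap_dist n x s' ?ppk 4 * (1/2 * (1 - hold_back n (ahead n ?ppk 4)))"
    using gap_dist_Suc[OF n_pos pk, of x s' 2] r by (simp add: qpk qppk numeral_3_eq_3 numeral_2_eq_2 eval_nat_numeral)
  have a3: "ahead n ?ppk 3 = ahead n ?pk 2" using ahead_cprev_Suc[OF n_pos pk, of 2] by simp
  have a4: "ahead n ?ppk 4 = ahead n ?pk 3" using ahead_cprev_Suc[OF n_pos pk, of 3] by simp
  have le2: "gap_dist n x s' ?pk 2 \<le> gap_dist n x s' ?ppk 3" using gap_dist_end_le[OF pk spk nppk, of 2 s'] n3 by simp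
  have le3: "gap_dist n x s' ?pk 3 \<le> gap_dist n x s' ?ppk 4" using gap_dist_end_le[OF pk spk nppk, of 3 s'] n3 by simp
  have "gap_dist n x s' ?pk 2 * hold_back n (ahead n ?pk 2) + gap_dist n x s' ?pk 3 * (1 - hold_back n (ahead n ?pk 3))
     \<le> gap_dist n x s' ?ppk 3 * hold_back n (ahead n ?pk 2) + gap_dist n x s' ?ppk 4 * (1 - hold_back n (ahead n ?pk 3))"
    using le2 le3 by (intro add_mono mult_right_mono hold_back_nonneg hold_back_compl_nonneg)
  then show ?thesis using L R a3 a4 Suc by (simp add: algebra_simps)
qed

lemma jump_weight_le: "k < 2*n \<Longrightarrow> gap_dist n x s k 1 * (1 - hold n k) \<le> 2 * (gap_dist n x s k 1 * hold n k + gap_dist n x s (cprev n k) 2 * (1 - hold n (cprev n k)))"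
proof -
  assume k: "k < 2*n"
  have p0: "0 \<le> gap_dist n x s k 1" "0 \<le> gap_dist n x s (cprev n k) 2" by (rule gap_dist_nonneg)+
  show ?thesis
  proof (cases "is_end n k")
    case False
    then show ?thesis using p0 hold_compl_nonneg[of n "cprev n k"] by (simp add: hold_def)
  next
    case True
    then have qk: "hold n k = 0" by (simp add: hold_def)
    from end_run[OF n3 k True] show ?thesis
    proof
      assume np: "\<not> is_end n (cprev n k)"
      then have qpk: "hold n (cprev n k) = 1/2" by (simp add: hold_def)
      have "gap_dist n x s k 1 \<le> gap_dist n x s (cprev n k) (1+1)" by (rule gap_dist_end_le[OF k True np]) (use n3 in auto)
      then have h: "gap_dist n x s k 1 \<le> gap_dist n x s (cprev n k) 2" by (simp add: numeral_2_eq_2)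
      show ?thesis using h by (simp add: qk qpk)
    next
      assume h: "is_end n (cprev n k) \<and> \<not> is_end n (cprev n (cprev n k))"
      then have "hold n (cprev n k) = 0" by (simp add: hold_def)
      then show ?thesis using gap_dist_double_end_le[OF k True] h qk by simp
    qed
  qed
qed

text \<open>
  The killed mass splits into meetings, after which both walkers occupy the same position, and
  crossings, where at gap 1 both walkers move and pass each other.
\<close>

definition "cross_back s k = (1 - hold_back n (ahead n k 1)) * back (Suc s) (cprev n (ahead n k 1))"
definition "jump_mass s = (\<Sum>k<2*n. gap_dist n x s k 1 * (1 - hold n k) * cross_back s k)"
definition "meet_mass s = (\<Sum>k<2*n. gap_dist n x s k 1 * (hold n k * cross_back s k
      + (1 - hold n k) * hold_back n (ahead n k 1) * back (Suc s) (ahead n k 1)) + gap_dist n x s k 2 * exit2 s k)"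

lemma exit_mass_split: "(\<Sum>k<2*n. gap_dist n x s k 1 * exit1 s k + gap_dist n x s k 2 * exit2 s k) = meet_mass s + jump_mass s"
  by (simp add: meet_mass_def jump_mass_def exit1_def cross_back_def sum.distrib[symmetric] algebra_simps)

lemma cross_back_nonneg: "k < 2*n \<Longrightarrow> 0 \<le> cross_back s k"
  unfolding cross_back_def by (intro mult_nonneg_nonneg hold_back_compl_nonneg back_nonneg cprev_lt ahead_lt[OF n_pos])

lemma exit2_cprev: "k < 2*n \<Longrightarrow> exit2 s (cprev n k) = (1 - hold n (cprev n k)) * cross_back s k"
  using ahead_cprev_Suc[OF n_pos, of k 1] by (simp add: exit2_def cross_back_def numeral_2_eq_2 mult.assoc)

lemma meet_mass_ge:
  "(\<Sum>k<2*n. (gap_dist n x s k 1 * hold n k + gap_dist n x s (cprev n k) 2 * (1 - hold n (cprev n k))) * cross_back s k)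
   \<le> meet_mass s"
proof -
  let ?g = "gap_dist n x s"
  have gap2: "(\<Sum>k<2*n. ?g (cprev n k) 2 * (1 - hold n (cprev n k)) * cross_back s k) = (\<Sum>k<2*n. ?g k 2 * exit2 s k)"
    using sum_reindex_cprev[of "\<lambda>k. ?g k 2 * exit2 s k" n] by (simp add: exit2_cprev mult.assoc)
  have gap1: "?g k 1 * hold n k * cross_back s k \<le> ?g k 1 * (hold n k * cross_back s k
      + (1 - hold n k) * hold_back n (ahead n k 1) * back (Suc s) (ahead n k 1))" if "k < 2*n" for k
  proof -
    have "0 \<le> ?g k 1 * ((1 - hold n k) * hold_back n (ahead n k 1) * back (Suc s) (ahead n k 1))"
      using that by (intro mult_nonneg_nonneg gap_dist_nonneg hold_compl_nonneg hold_back_nonneg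
          back_nonneg ahead_lt[OF n_pos])
    then show ?thesis by (simp add: algebra_simps)
  qed
  have "(\<Sum>k<2*n. ?g k 1 * hold n k * cross_back s k) + (\<Sum>k<2*n. ?g k 2 * exit2 s k) \<le> meet_mass s"
    unfolding meet_mass_def sum.distrib using gap1 by (intro add_mono sum_mono) auto
  moreover have "(\<Sum>k<2*n. (?g k 1 * hold n k + ?g (cprev n k) 2 * (1 - hold n (cprev n k))) * cross_back s k)
      = (\<Sum>k<2*n. ?g k 1 * hold n k * cross_back s k) + (\<Sum>k<2*n. ?g (cprev n k) 2 * (1 - hold n (cprev n k)) * cross_back s k)"
    by (simp only: distrib_right sum.distrib)
  ultimately show ?thesis using gap2 by simp
qed

text \<open>Crossings are at most twice as likely as meetings: where the forward walker moves with
  probability 1/2 it also holds with probability 1/2, and at end positions (where it never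
  holds) the gap-1 mass is dominated by gap-2 mass one step behind.\<close>

lemma jump_mass_le: "jump_mass s \<le> 2 * meet_mass s"
proof -
  have "jump_mass s \<le> (\<Sum>k<2*n. 2 * (gap_dist n x s k 1 * hold n k
      + gap_dist n x s (cprev n k) 2 * (1 - hold n (cprev n k))) * cross_back s k)"
    unfolding jump_mass_def using jump_weight_le cross_back_nonneg by (intro sum_mono mult_right_mono) auto
  also have "\<dots> = 2 * (\<Sum>k<2*n. (gap_dist n x s k 1 * hold n k
      + gap_dist n x s (cprev n k) 2 * (1 - hold n (cprev n k))) * cross_back s k)"
    by (subst sum_distrib_left) (intro sum.cong refl, simp add: algebra_simps)
  also have "\<dots> \<le> 2 * meet_mass s" using meet_mass_ge[of s] by simp
  finally show ?thesis .
qed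

lemma gap_dist_le_walk: "k < 2*n \<Longrightarrow> gap_dist n x s k d \<le> 2 * matpow (2*n) (Qf n) s x k"
proof -
  assume k: "k < 2*n"
  have "gap_dist n x s k d * 1 ^ d \<le> tilt_fwd 1 n x s k * tilt_bwd 1 n s (ahead n k d)"
    by (rule gap_dist_tilt_bound[OF _ n_pos k]) simp
  also have "\<dots> \<le> matpow (2*n) (Qf n) s x k * 2"
  proof -
    have "tilt_bwd 1 n s (ahead n k d) \<le> 2"
      using tilt_bwd_1_le[OF n3 ahead_lt[OF n_pos]] weight_le2 order.trans by blast
    moreover have "0 \<le> matpow (2*n) (Qf n) s x k" using k by (intro matpow_nonneg) (auto simp: Qf_nonneg)
    ultimately show ?thesis using tilt_fwd_1[OF n_pos k] by (simp add: mult_left_mono)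
  qed
  finally show ?thesis by simp
qed

lemma meet_term_le:
  assumes k: "k < 2*n"
  shows "gap_dist n x s k 1 * (hold n k * cross_back s k
           + (1 - hold n k) * hold_back n (ahead n k 1) * back (Suc s) (ahead n k 1)) + gap_dist n x s k 2 * exit2 s k
         \<le> 4 * (matpow (2*n) (Qf n) s x k * (hold n k * back (Suc s) k + (1 - hold n k) * back (Suc s) (cnext n k)))"
proof -
  let ?P = "matpow (2*n) (Qf n) s x k" and ?h = "back (Suc s)"
  let ?S = "hold n k * ?h k + (1 - hold n k) * ?h (cnext n k)"
  have a1: "ahead n k 1 = cnext n k" by (rule ahead_1[OF n_pos k])
  have a2: "cprev n (ahead n k 2) = cnext n k" using ahead_pred[OF n_pos, of 2 k] a1 by simp
  have h0: "0 \<le> ?h k" "0 \<le> ?h (cnext n k)" using k by (auto intro!: back_nonneg)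
  have P0: "0 \<le> ?P" using k by (intro matpow_nonneg) (auto simp: Qf_nonneg)
  have gap1: "hold n k * cross_back s k + (1 - hold n k) * hold_back n (ahead n k 1) * ?h (ahead n k 1) \<le> ?S"
  proof -
    have "0 \<le> hold_back n (cnext n k) * ?h k" using h0 hold_back_nonneg[of n "cnext n k"] by simp
    then have "(1 - hold_back n (cnext n k)) * ?h k \<le> ?h k" by (simp add: left_diff_distrib)
    then have "hold n k * cross_back s k \<le> hold n k * ?h k"
      unfolding cross_back_def a1 cprev_cnext[OF k] by (rule mult_left_mono[OF _ hold_nonneg])
    moreover have "0 \<le> (1 - hold_back n (cnext n k)) * ?h (cnext n k)"
      using h0 hold_back_compl_nonneg[of n "cnext n k"] by simp
    then have "hold_back n (cnext n k) * ?h (cnext n k) \<le> ?h (cnext n k)" by (simp add: left_diff_distrib)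
    then have "(1 - hold n k) * hold_back n (ahead n k 1) * ?h (ahead n k 1) \<le> (1 - hold n k) * ?h (cnext n k)"
      unfolding a1 mult.assoc by (rule mult_left_mono[OF _ hold_compl_nonneg])
    ultimately show ?thesis by linarith
  qed
  have gap2: "exit2 s k \<le> ?S"
  proof -
    have "0 \<le> hold_back n (ahead n k 2) * ?h (cnext n k)" using h0 hold_back_nonneg[of n "ahead n k 2"] by simp
    then have "(1 - hold_back n (ahead n k 2)) * ?h (cnext n k) \<le> ?h (cnext n k)" by (simp add: left_diff_distrib)
    then have "exit2 s k \<le> (1 - hold n k) * ?h (cnext n k)"
      unfolding exit2_def a2 mult.assoc by (rule mult_left_mono[OF _ hold_compl_nonneg])
    moreover have "0 \<le> hold n k * ?h k" using h0 hold_nonneg[of n k] by simp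
    ultimately show ?thesis by linarith
  qed
  have first0: "0 \<le> hold n k * cross_back s k + (1 - hold n k) * hold_back n (ahead n k 1) * ?h (ahead n k 1)"
    using cross_back_nonneg[OF k] back_nonneg[OF ahead_lt[OF n_pos]]
    by (intro add_nonneg_nonneg mult_nonneg_nonneg hold_nonneg hold_compl_nonneg hold_back_nonneg)
  have exit2_0: "0 \<le> exit2 s k"
    unfolding exit2_def using h0 a2 by (intro mult_nonneg_nonneg hold_compl_nonneg hold_back_compl_nonneg) simp
  have "gap_dist n x s k 1 * (hold n k * cross_back s k + (1 - hold n k) * hold_back n (ahead n k 1) * ?h (ahead n k 1)) \<le> (2 * ?P) * ?S"
    using P0 by (intro mult_mono[OF gap_dist_le_walk[OF k] gap1 _ first0]) simp
  moreover have "gap_dist n x s k 2 * exit2 s k \<le> (2 * ?P) * ?S"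
    using P0 by (intro mult_mono[OF gap_dist_le_walk[OF k] gap2 _ exit2_0]) simp
  ultimately show ?thesis by simp
qed

text \<open>Summing over k: the meeting mass is at most four times the probability that both
  walkers are at the same position at time s+1.\<close>

lemma meet_mass_le: "meet_mass s \<le> 4 * (\<Sum>j<2*n. matpow (2*n) (Qf n) (Suc s) x j * back (Suc s) j)"
proof -
  have "meet_mass s \<le> (\<Sum>k<2*n. 4 * (matpow (2*n) (Qf n) s x k * (\<Sum>j<2*n. Qf n k j * back (Suc s) j)))"
    unfolding meet_mass_def using meet_term_le by (intro sum_mono) (simp add: Qf_row[OF n_pos])
  also have "\<dots> = 4 * (\<Sum>k<2*n. matpow (2*n) (Qf n) s x k * (\<Sum>j<2*n. Qf n k j * back (Suc s) j))"
    by (rule sum_distrib_left[symmetric])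
  also have "\<dots> = 4 * (\<Sum>j<2*n. matpow (2*n) (Qf n) (Suc s) x j * back (Suc s) j)"
    by (simp only: matpow_Suc_apply)
  finally show ?thesis .
qed

lemma surv_telescope: "m \<le> horizon \<Longrightarrow> surv 0 = surv m + (\<Sum>s<m. meet_mass s + jump_mass s)"
proof (induction m)
  case 0 then show ?case by simp
next
  case (Suc m)
  then have "m < horizon" by simp
  then show ?case using Suc surv_step[of m] exit_mass_split[of m] by simp
qed

text \<open>Initially surv is the total probability that the backward walk, started anywhere,
  is at z at the horizon; by stationarity of the weights this is at least 1/2.\<close>

lemma surv_start: "surv 0 \<ge> 1/2"
proof -
  let ?R = "{1..4*n}" and ?W = "{2*n+1..4*n}"
  have start: "(\<Sum>d\<in>?R. gap_dist n x 0 k d * back 0 (ahead n k d))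
      = (if x = k then (\<Sum>d\<in>?R. if d \<in> ?W then back 0 (ahead n x d) else 0) else 0)" for k
    by (cases "x = k") (auto intro!: sum.cong)
  have "surv 0 = (\<Sum>k<2*n. if x = k then (\<Sum>d\<in>?R. if d \<in> ?W then back 0 (ahead n x d) else 0) else 0)"
    unfolding surv_def by (simp only: start)
  also have "\<dots> = (\<Sum>d\<in>?R. (if d \<in> ?W then back 0 (ahead n x d) else 0))"
    by (subst sum.delta'[OF finite_lessThan], simp only: lessThan_iff xl if_True)
  also have "\<dots> = (\<Sum>d\<in>?R \<inter> ?W. back 0 (ahead n x d))" by (rule sum.inter_restrict[symmetric]) simp
  also have "?R \<inter> ?W = ?W" by auto
  also have "(\<Sum>d\<in>?W. back 0 (ahead n x d)) = (\<Sum>u<2*n. back 0 u)"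
    by (rule sum.reindex_bij_betw[OF bij_ahead[OF n_pos xl]])
  finally have e: "surv 0 = (\<Sum>u<2*n. back 0 u)" .
  have st: "(\<Sum>u<2*n. weight n (cmirror n u) * back 0 u) = weight n (cmirror n z)"
    unfolding back_def by (rule matpow_stationary[OF weight_Qb_stationary[OF n3] zl])
  have "(\<Sum>u<2*n. weight n (cmirror n u) * back 0 u) \<le> (\<Sum>u<2*n. 2 * back 0 u)"
    using back_nonneg weight_le2 by (intro sum_mono mult_right_mono) auto
  then have "weight n (cmirror n z) \<le> 2 * (\<Sum>u<2*n. back 0 u)" using st by (simp add: sum_distrib_left)
  then show ?thesis using e weight_ge1[of n "cmirror n z"] by simp
qed

text \<open>At the horizon, each surviving state has the walkers still 2n or more steps apart
  after 8n steps; the tilted (\<mu> = 2) bounds make this exponentially unlikely.\<close>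

lemma surv_horizon_term:
  assumes k: "k < 2*n" and d: "d \<in> {1..4*n}"
  shows "gap_dist n x horizon k d * back horizon (ahead n k d) \<le> tilt_fwd 2 n x horizon k * ((3/4)^horizon * 2^(4*n))"
proof -
  let ?g = "gap_dist n x horizon k d"
  have "?g * back horizon (ahead n k d) \<le> ?g"
    using gap_dist_nonneg[of n x horizon k d] by (simp add: back_def mult_left_le)
  also have "\<dots> \<le> ?g * 2 ^ d / 2"
  proof -
    have "(2::real) \<le> 2 ^ d" using d by (simp add: self_le_power)
    then show ?thesis using gap_dist_nonneg[of n x horizon k d] by (simp add: mult_left_mono[of 2 "2^d", simplified] le_divide_eq)
  qed
  also have "\<dots> \<le> tilt_fwd 2 n x horizon k * tilt_bwd 2 n horizon (ahead n k d) / 2"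
    using gap_dist_tilt_bound[of 2 n k x horizon d] n_pos k by (intro divide_right_mono) auto
  also have "\<dots> \<le> tilt_fwd 2 n x horizon k * ((3/4)^horizon * 2^(4*n) * 2) / 2"
  proof -
    have "tilt_bwd 2 n horizon (ahead n k d) \<le> (3/4)^horizon * 2^(4*n) * weight n (cmirror n (ahead n k d))"
      by (rule tilt_bwd_2_le[OF n3 ahead_lt[OF n_pos]])
    also have "\<dots> \<le> (3/4)^horizon * 2^(4*n) * 2" using weight_le2 by (intro mult_left_mono) auto
    finally show ?thesis using tilt_fwd_nonneg[of 2 n x horizon k] by (intro divide_right_mono mult_left_mono) auto
  qed
  finally show ?thesis by simp
qed

lemma surv_horizon: "surv horizon \<le> 1/8"
proof -
  let ?c = "(3/4::real)^horizon * 2^(4*n)"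
  have "surv horizon \<le> (\<Sum>k<2*n. \<Sum>d\<in>{1..4*n}. tilt_fwd 2 n x horizon k * ?c)"
    unfolding surv_def using surv_horizon_term by (intro sum_mono) auto
  also have "\<dots> = (\<Sum>k<2*n. tilt_fwd 2 n x horizon k * (4 * real n * ?c))"
    by (intro sum.cong refl) (simp add: mult_ac)
  also have "\<dots> = (\<Sum>k<2*n. tilt_fwd 2 n x horizon k) * (4 * real n * ?c)"
    by (rule sum_distrib_right[symmetric])
  also have "\<dots> \<le> (3/4)^horizon * (4 * real n * ?c)"
    using tilt_fwd_2_sum[OF n_pos, of x horizon] by (intro mult_right_mono) auto
  also have "\<dots> \<le> 1/8"
    using chernoff_numeric[OF n3] by (simp add: horizon_def mult_ac)
  finally show ?thesis .
qed

theorem meeting_lower_bound: "(\<Sum>s<horizon. \<Sum>j<2*n. matpow (2*n) (Qf n) (Suc s) x j * matpow (2*n) (Qb n) (horizon - Suc s) j z) \<ge> 1/32"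
proof -
  have t: "surv 0 = surv horizon + (\<Sum>s<horizon. meet_mass s + jump_mass s)" by (rule surv_telescope) simp
  have "(\<Sum>s<horizon. meet_mass s + jump_mass s) \<le> (\<Sum>s<horizon. 12 * (\<Sum>j<2*n. matpow (2*n) (Qf n) (Suc s) x j * back (Suc s) j))"
  proof (rule sum_mono)
    fix s
    show "meet_mass s + jump_mass s \<le> 12 * (\<Sum>j<2*n. matpow (2*n) (Qf n) (Suc s) x j * back (Suc s) j)"
      using jump_mass_le[of s] meet_mass_le[of s] by linarith
  qed
  then have "1/2 \<le> 1/8 + 12 * (\<Sum>s<horizon. \<Sum>j<2*n. matpow (2*n) (Qf n) (Suc s) x j * back (Suc s) j)"
    using t surv_start surv_horizon by (simp add: sum_distrib_left)
  then show ?thesis by (simp add: back_def)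
qed

end

section \<open>The cyclic kernel and its Doeblin minorisation\<close>

text \<open>
  The original chain in cycle coordinates: Krot holds or moves forward (a forward move is
  damped by 1 - 1/U) and Krefl jumps to the mirror position with probability refl_prob.
\<close>

definition refl_prob :: "nat \<Rightarrow> nat \<Rightarrow> nat \<Rightarrow> real" where
  "refl_prob n U j = (if is_end n j then 1 / real U else 1 / (2 * real U))"
definition Krot :: "nat \<Rightarrow> nat \<Rightarrow> nat \<Rightarrow> nat \<Rightarrow> real" where
  "Krot n U j j' = (if j' = j then hold n j else 0) + (if j' = cnext n j then (1 - 1 / real U) * (1 - hold n j) else 0)"
definition Krefl :: "nat \<Rightarrow> nat \<Rightarrow> nat \<Rightarrow> nat \<Rightarrow> real" where
  "Krefl n U j j' = (if j' = cmirror n j then refl_prob n U j else 0)"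
definition Kcyc :: "nat \<Rightarrow> nat \<Rightarrow> nat \<Rightarrow> nat \<Rightarrow> real" where
  "Kcyc n U j j' = Krot n U j j' + Krefl n U j j'"

definition pi_cyc :: "nat \<Rightarrow> nat \<Rightarrow> real" where
  "pi_cyc n j = weight n j / (4 * (real n - 1))"

text \<open>The Doeblin constant: every entry of Kcyc^(8n+1) is at least minor n U.\<close>
definition minor :: "nat \<Rightarrow> nat \<Rightarrow> real" where
  "minor n U = (1 - 1 / real U) ^ (8*n) / (64 * real U)"

declare matpow.simps(2)[simp del]

locale cyclic_chain =
  fixes n U :: nat
  assumes n3: "n \<ge> 3" and U3: "U \<ge> 3"
begin

lemma n_pos: "n \<ge> 1" using n3 by simp

lemma U_inverse: "0 < 1 / real U" "1 / real U \<le> 1/3" using U3 by auto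

lemma refl_prob_nonneg: "0 \<le> refl_prob n U j" by (simp add: refl_prob_def)
lemma Krot_nonneg: "0 \<le> Krot n U j j'"
  using U_inverse hold_compl_nonneg[of n j] hold_nonneg[of n j] by (auto simp: Krot_def intro!: mult_nonneg_nonneg)
lemma Krefl_nonneg: "0 \<le> Krefl n U j j'" using refl_prob_nonneg by (simp add: Krefl_def)
lemma Kcyc_nonneg: "0 \<le> Kcyc n U j j'" using Krot_nonneg Krefl_nonneg by (simp add: Kcyc_def)

lemma Kcyc_row_sum: "j < 2*n \<Longrightarrow> (\<Sum>j'<2*n. Kcyc n U j j') = 1"
proof -
  assume j: "j < 2*n"
  have "(\<Sum>j'<2*n. Kcyc n U j j') = hold n j + (1 - 1 / real U) * (1 - hold n j) + refl_prob n U j"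
    unfolding Kcyc_def Krot_def Krefl_def using j by (simp add: sum.distrib sum.delta')
  also have "\<dots> = 1" by (auto simp: hold_def refl_prob_def field_simps)
  finally show ?thesis .
qed

lemma Krot_ge: "(1 - 1 / real U) * Qf n j j' \<le> Krot n U j j'"
proof -
  have "(1 - 1 / real U) * hold n j \<le> hold n j"
    using U_inverse hold_nonneg[of n j] by (simp add: mult_left_le_one_le)
  then show ?thesis unfolding Qf_def Krot_def distrib_left by (intro add_mono) auto
qed

lemma weight_Kcyc_stationary: "k < 2*n \<Longrightarrow> (\<Sum>i<2*n. weight n i * Kcyc n U i k) = weight n k"
proof -
  assume k: "k < 2*n"
  have rot: "(\<Sum>i<2*n. weight n i * Krot n U i k)
      = weight n k * hold n k + weight n (cprev n k) * ((1 - 1/real U) * (1 - hold n (cprev n k)))"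
  proof -
    have "(\<Sum>i<2*n. weight n i * Krot n U i k) = (\<Sum>i<2*n. (if k = i then weight n i * hold n i else 0)
        + (if cprev n k = i then weight n i * ((1 - 1/real U) * (1 - hold n i)) else 0))"
      using k cprev_neq[OF n_pos k] by (intro sum.cong) (auto simp: Krot_def cnext_eq_iff)
    then show ?thesis using k by (simp add: sum.distrib)
  qed
  have refl: "(\<Sum>i<2*n. weight n i * Krefl n U i k) = weight n (cmirror n k) * refl_prob n U (cmirror n k)"
  proof -
    have "(\<Sum>i<2*n. weight n i * Krefl n U i k) = (\<Sum>i<2*n. if cmirror n k = i then weight n i * refl_prob n U i else 0)"
      using k by (intro sum.cong refl) (auto simp: Krefl_def cmirror_eq_iff)
    then show ?thesis using k by simp
  qed
  have w1: "weight n (cmirror n k) * refl_prob n U (cmirror n k) = 1 / real U"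
    and w2: "weight n (cprev n k) * ((1 - 1/real U) * (1 - hold n (cprev n k))) = 1 - 1/real U"
    and w3: "weight n (cprev n k) * (1 - hold n (cprev n k)) = 1"
    by (auto simp: weight_def refl_prob_def hold_def)
  have "(\<Sum>i<2*n. weight n i * Kcyc n U i k) = weight n k * hold n k + weight n (cprev n k) * (1 - hold n (cprev n k))"
    unfolding Kcyc_def distrib_left sum.distrib rot refl w1 w2 w3 by simp
  also have "\<dots> = weight n k" using weight_balance[OF n3 k] .
  finally show ?thesis .
qed

lemma weight_sum: "(\<Sum>j<2*n. weight n j) = 4 * real n - 4"
proof -
  have "(\<Sum>j<2*n. weight n j) = (\<Sum>j<2*n. 2 - (if j \<in> {0,1,n,n+1} then 1 else 0))"
    by (intro sum.cong) (auto simp: weight_def is_end_def)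
  also have "\<dots> = 4 * real n - (\<Sum>j<2*n. if j \<in> {0,1,n,n+1} then 1 else 0)"
    by (simp add: sum_subtractf)
  also have "(\<Sum>j<2*n. if j \<in> {0,1,n,n+1} then 1 else (0::real)) = (\<Sum>j\<in>{..<2*n} \<inter> {0,1,n,n+1}. 1)"
    by (rule sum.inter_restrict[symmetric]) simp
  also have "{..<2*n} \<inter> {0,1,n,n+1} = {0,1,n,n+1}" using n3 by auto
  also have "(\<Sum>j\<in>{0,1,n,n+1}. (1::real)) = 4" using n3 by simp
  finally show ?thesis by simp
qed

lemma pi_cyc_stationary: "k < 2*n \<Longrightarrow> (\<Sum>i<2*n. pi_cyc n i * Kcyc n U i k) = pi_cyc n k"
  using weight_Kcyc_stationary by (simp add: pi_cyc_def sum_divide_distrib[symmetric] mult.commute)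

lemma pi_cyc_sum: "(\<Sum>j<2*n. pi_cyc n j) = 1"
  using weight_sum n3 by (simp add: pi_cyc_def sum_divide_distrib[symmetric])

lemma pi_cyc_nonneg: "0 \<le> pi_cyc n j" using n3 weight_ge1[of n j] by (simp add: pi_cyc_def)

end

sublocale cyclic_chain \<subseteq> stochastic_matrix "2*n" "Kcyc n U" "pi_cyc n"
  using Kcyc_nonneg Kcyc_row_sum pi_cyc_stationary pi_cyc_sum pi_cyc_nonneg
  by unfold_locales auto

context cyclic_chain
begin

lemma Krot_pow_ge:
  "b < 2*n \<Longrightarrow> (1 - 1 / real U) ^ s * matpow (2*n) (Qf n) s a b \<le> matpow (2*n) (Krot n U) s a b"
proof -
  assume b: "b < 2*n"
  have "matpow (2*n) (\<lambda>i j. (1 - 1 / real U) * Qf n i j) s a b \<le> matpow (2*n) (Krot n U) s a b"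
    by (rule matpow_mono) (use b U_inverse Krot_ge in \<open>auto intro: mult_nonneg_nonneg Qf_nonneg\<close>)
  then show ?thesis by (simp add: matpow_scale)
qed

lemma one_jump_Kcyc:
  "one_jump (2*n) (Krot n U) (Krefl n U) T i k
   = (\<Sum>s\<le>T. \<Sum>j<2*n. matpow (2*n) (Krot n U) s i j * (refl_prob n U j * matpow (2*n) (Krot n U) (T - s) (cmirror n j) k))"
proof -
  have "(\<Sum>l<2*n. Krefl n U j l * matpow (2*n) (Krot n U) (T - s) l k)
      = refl_prob n U j * matpow (2*n) (Krot n U) (T - s) (cmirror n j) k" if j: "j < 2*n" for s j
  proof -
    have "(\<Sum>l<2*n. Krefl n U j l * matpow (2*n) (Krot n U) (T - s) l k)
        = (\<Sum>l<2*n. if cmirror n j = l then refl_prob n U j * matpow (2*n) (Krot n U) (T - s) l k else 0)"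
      by (intro sum.cong) (auto simp: Krefl_def)
    then show ?thesis using j by simp
  qed
  then show ?thesis unfolding one_jump_def by (intro sum.cong refl) simp
qed

lemma one_jump_Kcyc_ge:
  assumes i: "i < 2*n" and k: "k < 2*n"
  shows "(1 - 1 / real U) ^ T / (2 * real U) *
           (\<Sum>s\<le>T. \<Sum>j<2*n. matpow (2*n) (Qf n) s i j * matpow (2*n) (Qf n) (T - s) (cmirror n j) k)
         \<le> one_jump (2*n) (Krot n U) (Krefl n U) T i k"
proof -
  let ?\<theta> = "1 - 1 / real U" and ?Q = "matpow (2*n) (Qf n)" and ?L = "matpow (2*n) (Krot n U)"
  have each: "?\<theta> ^ T / (2 * real U) * (?Q s i j * ?Q (T - s) (cmirror n j) k)
        \<le> ?L s i j * (refl_prob n U j * ?L (T - s) (cmirror n j) k)"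
    if s: "s \<le> T" and j: "j < 2*n" for s j
  proof -
    have th0: "0 \<le> ?\<theta>" using U_inverse by simp
    have q0: "0 \<le> ?\<theta> ^ s * ?Q s i j" "0 \<le> ?\<theta> ^ (T - s) * ?Q (T - s) (cmirror n j) k"
      using j k th0 by (auto intro!: mult_nonneg_nonneg zero_le_power matpow_nonneg simp: Qf_nonneg)
    have r: "1 / (2 * real U) \<le> refl_prob n U j" using U3 by (simp add: refl_prob_def frac_le)
    have "?\<theta> ^ T / (2 * real U) * (?Q s i j * ?Q (T - s) (cmirror n j) k)
        = (?\<theta> ^ s * ?Q s i j) * (1 / (2 * real U) * (?\<theta> ^ (T - s) * ?Q (T - s) (cmirror n j) k))"
      using s by (simp add: power_add[symmetric] mult_ac)
    also have "\<dots> \<le> ?L s i j * (refl_prob n U j * ?L (T - s) (cmirror n j) k)"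
      using j q0 r Krot_pow_ge[OF j] Krot_pow_ge[OF k] refl_prob_nonneg
      by (intro mult_mono) (auto intro!: matpow_nonneg simp: Krot_nonneg)
    finally show ?thesis .
  qed
  show ?thesis
    unfolding one_jump_Kcyc sum_distrib_left using each by (intro sum_mono) auto
qed

text \<open>By the relabelling a \<mapsto> -a, the backward walk to -k is the forward walk from the
  mirror image; hence the meeting estimate bounds the sum over reflection times.\<close>

lemma reflection_sum_ge:
  assumes i: "i < 2*n" and k: "k < 2*n"
  shows "1/32 \<le> (\<Sum>s\<le>8*n. \<Sum>j<2*n. matpow (2*n) (Qf n) s i j * matpow (2*n) (Qf n) (8*n - s) (cmirror n j) k)"
proof -
  let ?Q = "matpow (2*n) (Qf n)"
  interpret M: meeting n i "cmirror n k" using n3 i k by unfold_locales auto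
  have mirror: "matpow (2*n) (Qb n) m j (cmirror n k) = ?Q m (cmirror n j) k" if "j < 2*n" for j m
    using matpow_relabel[OF bij_cmirror, where B="Qb n" and A="Qf n"] Qb_eq_mirror_Qf k that by simp
  have "1/32 \<le> (\<Sum>s<8*n. \<Sum>j<2*n. ?Q (Suc s) i j * ?Q (8*n - Suc s) (cmirror n j) k)"
    using M.meeting_lower_bound mirror by (simp add: M.horizon_def)
  also have "\<dots> \<le> (\<Sum>j<2*n. ?Q 0 i j * ?Q (8*n) (cmirror n j) k)
      + (\<Sum>s<8*n. \<Sum>j<2*n. ?Q (Suc s) i j * ?Q (8*n - Suc s) (cmirror n j) k)"
  proof -
    have "0 \<le> (\<Sum>j<2*n. ?Q 0 i j * ?Q (8*n) (cmirror n j) k)"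
      using k by (intro sum_nonneg mult_nonneg_nonneg matpow_nonneg) (auto simp: Qf_nonneg)
    then show ?thesis by linarith
  qed
  also have "\<dots> = (\<Sum>s<Suc (8*n). \<Sum>j<2*n. ?Q s i j * ?Q (8*n - s) (cmirror n j) k)"
    by (simp only: sum.lessThan_Suc_shift diff_zero)
  also have "\<dots> = (\<Sum>s\<le>8*n. \<Sum>j<2*n. ?Q s i j * ?Q (8*n - s) (cmirror n j) k)"
    by (simp only: lessThan_Suc_atMost)
  finally show ?thesis .
qed

lemma Kcyc_pow_lower:
  assumes i: "i < 2*n" and k: "k < 2*n"
  shows "minor n U \<le> matpow (2*n) (Kcyc n U) (Suc (8*n)) i k"
proof -
  let ?c = "(1 - 1 / real U) ^ (8*n) / (2 * real U)"
  have "minor n U = ?c * (1/32)" by (simp add: minor_def)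
  also have "\<dots> \<le> ?c * (\<Sum>s\<le>8*n. \<Sum>j<2*n. matpow (2*n) (Qf n) s i j * matpow (2*n) (Qf n) (8*n - s) (cmirror n j) k)"
    using reflection_sum_ge[OF i k] U_inverse by (intro mult_left_mono) auto
  also have "\<dots> \<le> one_jump (2*n) (Krot n U) (Krefl n U) (8*n) i k" by (rule one_jump_Kcyc_ge[OF i k])
  also have "\<dots> \<le> matpow (2*n) (Kcyc n U) (Suc (8*n)) i k"
    by (rule one_jump_le) (auto simp: Krot_nonneg Krefl_nonneg Kcyc_def k)
  finally show ?thesis .
qed

lemma minor_mass_le1: "real (2*n) * minor n U \<le> 1"
proof -
  have "(\<Sum>b<2*n. minor n U) \<le> (\<Sum>b<2*n. matpow (2*n) (Kcyc n U) (Suc (8*n)) 0 b)"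
    using Kcyc_pow_lower n3 by (intro sum_mono) auto
  then show ?thesis using matpow_row_sum[OF Kcyc_row_sum, where i = 0 and t = "Suc (8*n)"] n3 by simp
qed

lemma dist_l1_Kcyc:
  "i < 2*n \<Longrightarrow> dist_l1 (2*n) (Kcyc n U) (pi_cyc n) i t \<le> 2 * (1 - real (2*n) * minor n U) ^ (t div Suc (8*n))"
  using doeblin_mixing Kcyc_pow_lower by blast

end

section \<open>Transfer to the original chain\<close>

definition cpos :: "nat \<Rightarrow> nat \<times> bool \<Rightarrow> nat" where
  "cpos n x = (if snd x then (if fst x = 1 then 0 else 2*n+1 - fst x) else fst x)"
definition cpos_inv :: "nat \<Rightarrow> nat \<Rightarrow> nat \<times> bool" where
  "cpos_inv n j = (if j = 0 then (1, True) else if j \<le> n then (j, False) else (2*n+1-j, True))"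

lemma bij_cpos: "n \<ge> 1 \<Longrightarrow> bij_betw (cpos n) (states n) {..<2*n}"
  by (rule bij_betw_byWitness[where f'="cpos_inv n"]) (auto simp: cpos_def cpos_inv_def states_def)

lemma cpos_inj: "n \<ge> 1 \<Longrightarrow> x \<in> states n \<Longrightarrow> y \<in> states n \<Longrightarrow> (cpos n x = cpos n y) = (x = y)"
  using bij_cpos by (metis bij_betw_def inj_on_eq_iff)

lemma cpos_lt: "x \<in> states n \<Longrightarrow> cpos n x < 2*n"
  by (auto simp: cpos_def states_def)

lemma finite_states: "finite (states n)" by (simp add: states_def)

lemma Kcyc_cpos:
  assumes n: "n \<ge> 1" and y: "y \<in> states n" and y123: "y1 \<in> states n" "y2 \<in> states n" "y3 \<in> states n"
    and c1: "j = cpos n y1" and c2: "cnext n j = cpos n y2" and c3: "cmirror n j = cpos n y3"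
  shows "Kcyc n U j (cpos n y) = (if y = y1 then hold n j else 0) + (if y = y2 then (1 - 1/real U) * (1 - hold n j) else 0)
       + (if y = y3 then refl_prob n U j else 0)"
proof -
  have e1: "(cpos n y = j) = (y = y1)" using c1 cpos_inj[OF n y y123(1)] by simp
  have e2: "(cpos n y = cnext n j) = (y = y2)" using c2 cpos_inj[OF n y y123(2)] by simp
  have e3: "(cpos n y = cmirror n j) = (y = y3)" using c3 cpos_inj[OF n y y123(3)] by simp
  show ?thesis unfolding Kcyc_def Krot_def Krefl_def e1 e2 e3 ..
qed

lemma K_eq_Kcyc_unprimed:
  assumes n: "n \<ge> 3" and xi: "x = (i, False)" and i: "1 \<le> i" "i \<le> n" and y: "y \<in> states n"
  shows "K n U x y = Kcyc n U (cpos n x) (cpos n y)"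
proof -
  have x: "x \<in> states n" using i xi by (auto simp: states_def)
  have n1: "n \<ge> 1" using n by simp
  let ?u = "real U"
  show ?thesis
  proof (cases "i = 1")
    case True
    have "Kcyc n U (cpos n x) (cpos n y) = (if y = (1,False) then 0 else 0) + (if y = (2,False) then (1 - 1/?u) * (1 - 0) else 0)
       + (if y = (2,True) then 1/?u else 0)"
      using Kcyc_cpos[OF n1 y, of "(1,False)" "(2,False)" "(2,True)" "cpos n x" U] n xi True
      by (simp add: states_def cpos_def cnext_def cmirror_def hold_def is_end_def refl_prob_def)
    moreover have "K n U x y = (if y = (2, False) then 1 - 1/?u else if y = (2, True) then 1/?u else 0)"
      using x y xi True by (simp add: K_def Let_def)
    ultimately show ?thesis by auto
  next
    case i1: False
    show ?thesis
    proof (cases "i = n")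
      case True
      have "Kcyc n U (cpos n x) (cpos n y) = (if y = (n,False) then 0 else 0) + (if y = (n,True) then (1 - 1/?u) * (1 - 0) else 0)
         + (if y = (n,False) then 1/?u else 0)"
        using Kcyc_cpos[OF n1 y, of "(n,False)" "(n,True)" "(n,False)" "cpos n x" U] n xi True
        by (simp add: states_def cpos_def cnext_def cmirror_def hold_def is_end_def refl_prob_def)
      moreover have "K n U x y = (if y = (n, True) then 1 - 1/?u else if y = (n, False) then 1/?u else 0)"
        using x y xi True i1 by (simp add: K_def Let_def)
      ultimately show ?thesis by auto
    next
      case i2: False
      have "Kcyc n U (cpos n x) (cpos n y) = (if y = (i,False) then 1/2 else 0) + (if y = (i+1,False) then (1 - 1/?u) * (1 - 1/2) else 0)
         + (if y = (i+1,True) then 1/(2*?u) else 0)"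
        using Kcyc_cpos[OF n1 y, of "(i,False)" "(i+1,False)" "(i+1,True)" "cpos n x" U] n xi i i1 i2
        by (simp add: states_def cpos_def cnext_def cmirror_def hold_def is_end_def refl_prob_def)
      moreover have "K n U x y = (if y = (i, False) then 1/2 else if y = (i+1, False) then (1/2) * (1 - 1/?u)
            else if y = (i+1, True) then 1/(2*?u) else 0)"
        using x y xi i1 i2 by (simp add: K_def Let_def)
      ultimately show ?thesis by auto
    qed
  qed
qed

lemma cpos_primed_interior:
  assumes n: "n \<ge> 3" and i: "1 < i" "i < n"
  shows "cnext n (cpos n (i, True)) = cpos n (i-1, True)" "cmirror n (cpos n (i, True)) = cpos n (i-1, False)"
    and "\<not> is_end n (cpos n (i, True))"
  using i n by (cases "i = 2"; auto simp: cnext_def cmirror_def cpos_def is_end_def)+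

lemma K_eq_Kcyc_primed:
  assumes n: "n \<ge> 3" and xi: "x = (i, True)" and i: "1 \<le> i" "i \<le> n" and y: "y \<in> states n"
  shows "K n U x y = Kcyc n U (cpos n x) (cpos n y)"
proof -
  have x: "x \<in> states n" using i xi by (auto simp: states_def)
  have n1: "n \<ge> 1" using n by simp
  let ?u = "real U"
  show ?thesis
  proof (cases "i = 1")
    case i1: True
    have "Kcyc n U (cpos n x) (cpos n y) = (if y = (1,True) then 0 else 0) + (if y = (1,False) then (1 - 1/?u) * (1 - 0) else 0)
       + (if y = (1,True) then 1/?u else 0)"
      using Kcyc_cpos[OF n1 y, of "(1,True)" "(1,False)" "(1,True)" "cpos n x" U] n xi i1
      by (simp add: states_def cpos_def cnext_def cmirror_def hold_def is_end_def refl_prob_def)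
    moreover have "K n U x y = (if y = (1, False) then 1 - 1/?u else if y = (1, True) then 1/?u else 0)"
      using x y xi i1 by (simp add: K_def Let_def)
    ultimately show ?thesis by auto
  next
    case i1: False
    show ?thesis
    proof (cases "i = n")
      case i2: True
      have "Kcyc n U (cpos n x) (cpos n y) = (if y = (n,True) then 0 else 0) + (if y = (n-1,True) then (1 - 1/?u) * (1 - 0) else 0)
         + (if y = (n-1,False) then 1/?u else 0)"
        using Kcyc_cpos[OF n1 y, of "(n,True)" "(n-1,True)" "(n-1,False)" "cpos n x" U] n xi i1 i2
        by (simp add: states_def cpos_def cnext_def cmirror_def hold_def is_end_def refl_prob_def)
      moreover have "K n U x y = (if y = (n-1, True) then 1 - 1/?u else if y = (n-1, False) then 1/?u else 0)"
        using x y xi i1 i2 by (simp add: K_def Let_def)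
      moreover have "(n-1, True) \<noteq> (n-1, False)" by simp
      ultimately show ?thesis by auto
    next
      case i2: False
      have "Kcyc n U (cpos n x) (cpos n y) = (if y = (i,True) then 1/2 else 0) + (if y = (i-1,True) then (1 - 1/?u) * (1 - 1/2) else 0)
         + (if y = (i-1,False) then 1/(2*?u) else 0)"
      proof -
        have "1 < i" "i < n" using i i1 i2 by auto
        note c = cpos_primed_interior[OF n this]
        have st: "(i,True) \<in> states n" "(i-1,True) \<in> states n" "(i-1,False) \<in> states n"
          using i i1 by (auto simp: states_def)
        show ?thesis using Kcyc_cpos[OF n1 y st refl c(1,2), of U] c(3) xi by (simp add: hold_def refl_prob_def)
      qed
      moreover have "K n U x y = (if y = (i, True) then 1/2 else if y = (i-1, True) then (1/2) * (1 - 1/?u)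
            else if y = (i-1, False) then 1/(2*?u) else 0)"
        using x y xi i1 i2 by (simp add: K_def Let_def)
      moreover have "i - 1 \<noteq> i" using i i1 by simp
      ultimately show ?thesis by auto
    qed
  qed
qed

lemma K_eq_Kcyc:
  assumes "n \<ge> 3" and x: "x \<in> states n" and "y \<in> states n"
  shows "K n U x y = Kcyc n U (cpos n x) (cpos n y)"
proof -
  obtain i b where "x = (i, b)" and "1 \<le> i" "i \<le> n" using x by (cases x) (auto simp: states_def)
  then show ?thesis using assms K_eq_Kcyc_unprimed[of n x i] K_eq_Kcyc_primed[of n x i] by (cases b) auto
qed

lemma Kpow_eq_matpow:
  assumes n: "n \<ge> 3" and x: "x \<in> states n"
  shows "y \<in> states n \<Longrightarrow> Kpow n U t x y = matpow (2*n) (Kcyc n U) t (cpos n x) (cpos n y)"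
proof (induction t arbitrary: y)
  case 0
  then show ?case using cpos_inj[of n x y] x n by simp
next
  case (Suc t)
  have "Kpow n U (Suc t) x y = (\<Sum>z\<in>states n. matpow (2*n) (Kcyc n U) t (cpos n x) (cpos n z) * Kcyc n U (cpos n z) (cpos n y))"
    using Suc K_eq_Kcyc[OF n _ Suc.prems] by simp
  also have "\<dots> = (\<Sum>j<2*n. matpow (2*n) (Kcyc n U) t (cpos n x) j * Kcyc n U j (cpos n y))"
    using n by (intro sum.reindex_bij_betw bij_cpos) simp
  also have "\<dots> = matpow (2*n) (Kcyc n U) (Suc t) (cpos n x) (cpos n y)" by (simp add: matpow.simps(2))
  finally show ?case .
qed

definition pi_states :: "nat \<Rightarrow> nat \<times> bool \<Rightarrow> real" where
  "pi_states n y = (if y \<in> states n then pi_cyc n (cpos n y) else 0)"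

lemma stationary_Kpow:
  assumes p: "is_stationary n U p" and y: "y \<in> states n"
  shows "(\<Sum>x\<in>states n. p x * Kpow n U t x y) = p y"
  using y
proof (induction t arbitrary: y)
  case 0
  then show ?case by (simp add: if_distrib[of "\<lambda>z. p _ * z"] finite_states cong: if_cong)
next
  case (Suc t)
  have "(\<Sum>x\<in>states n. p x * Kpow n U (Suc t) x y) = (\<Sum>x\<in>states n. \<Sum>z\<in>states n. p x * Kpow n U t x z * K n U z y)"
    by (simp add: sum_distrib_left mult.assoc)
  also have "\<dots> = (\<Sum>z\<in>states n. (\<Sum>x\<in>states n. p x * Kpow n U t x z) * K n U z y)"
    by (subst sum.swap) (simp add: sum_distrib_right)
  also have "\<dots> = p y" using Suc p by (simp add: is_stationary_def)
  finally show ?case .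
qed

lemma stationary_dist_le:
  assumes p: "is_stationary n U p" and rows: "\<And>x. x \<in> states n \<Longrightarrow> (\<Sum>y\<in>states n. \<bar>Kpow n U t x y - q y\<bar>) \<le> e"
  shows "(\<Sum>y\<in>states n. \<bar>p y - q y\<bar>) \<le> e"
proof -
  have p0: "\<And>x. x \<in> states n \<Longrightarrow> 0 \<le> p x" and p1: "(\<Sum>x\<in>states n. p x) = 1"
    using p by (auto simp: is_stationary_def)
  have "\<bar>p y - q y\<bar> \<le> (\<Sum>x\<in>states n. p x * \<bar>Kpow n U t x y - q y\<bar>)" if y: "y \<in> states n" for y
  proof -
    have "p y - q y = (\<Sum>x\<in>states n. p x * (Kpow n U t x y - q y))"
      using stationary_Kpow[OF p y, of t] p1 by (simp add: right_diff_distrib sum_subtractf sum_distrib_right[symmetric])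
    then have "\<bar>p y - q y\<bar> \<le> (\<Sum>x\<in>states n. \<bar>p x * (Kpow n U t x y - q y)\<bar>)"
      by (simp only: sum_abs)
    also have "\<dots> = (\<Sum>x\<in>states n. p x * \<bar>Kpow n U t x y - q y\<bar>)"
      using p0 by (intro sum.cong refl) (simp add: abs_mult)
    finally show ?thesis .
  qed
  then have "(\<Sum>y\<in>states n. \<bar>p y - q y\<bar>) \<le> (\<Sum>y\<in>states n. \<Sum>x\<in>states n. p x * \<bar>Kpow n U t x y - q y\<bar>)"
    by (intro sum_mono) auto
  also have "\<dots> = (\<Sum>x\<in>states n. p x * (\<Sum>y\<in>states n. \<bar>Kpow n U t x y - q y\<bar>))"
    by (subst sum.swap) (simp add: sum_distrib_left)
  also have "\<dots> \<le> (\<Sum>x\<in>states n. p x * e)" using p0 rows by (intro sum_mono mult_left_mono) auto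
  also have "\<dots> = e" using p1 by (simp add: sum_distrib_right[symmetric])
  finally show ?thesis .
qed

context cyclic_chain
begin

lemma dist_l1_states:
  assumes x: "x \<in> states n"
  shows "(\<Sum>y\<in>states n. \<bar>Kpow n U t x y - pi_states n y\<bar>) = dist_l1 (2*n) (Kcyc n U) (pi_cyc n) (cpos n x) t"
proof -
  have "(\<Sum>y\<in>states n. \<bar>Kpow n U t x y - pi_states n y\<bar>)
      = (\<Sum>y\<in>states n. \<bar>matpow (2*n) (Kcyc n U) t (cpos n x) (cpos n y) - pi_cyc n (cpos n y)\<bar>)"
    using Kpow_eq_matpow[OF n3 x] by (intro sum.cong refl) (simp add: pi_states_def)
  also have "\<dots> = (\<Sum>j<2*n. \<bar>matpow (2*n) (Kcyc n U) t (cpos n x) j - pi_cyc n j\<bar>)"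
    by (rule sum.reindex_bij_betw[OF bij_cpos[OF n_pos]])
  finally show ?thesis by (simp add: dist_l1_def)
qed

lemma rows_converge:
  "x \<in> states n \<Longrightarrow> (\<Sum>y\<in>states n. \<bar>Kpow n U t x y - pi_states n y\<bar>) \<le> 2 * (1 - real (2*n) * minor n U) ^ (t div Suc (8*n))"
  unfolding dist_l1_states by (rule dist_l1_Kcyc[OF cpos_lt])

lemma pi_states_stationary: "is_stationary n U (pi_states n)"
  unfolding is_stationary_def
proof (intro conjI ballI allI impI)
  fix x assume "x \<in> states n" then show "0 \<le> pi_states n x" using pi_cyc_nonneg by (simp add: pi_states_def)
next
  fix x assume "x \<notin> states n" then show "pi_states n x = 0" by (simp add: pi_states_def)
next
  have "(\<Sum>x\<in>states n. pi_states n x) = (\<Sum>x\<in>states n. pi_cyc n (cpos n x))" by (intro sum.cong) (auto simp: pi_states_def)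
  also have "\<dots> = (\<Sum>j<2*n. pi_cyc n j)" by (rule sum.reindex_bij_betw[OF bij_cpos[OF n_pos]])
  finally show "(\<Sum>x\<in>states n. pi_states n x) = 1" using pi_cyc_sum by simp
next
  fix y assume y: "y \<in> states n"
  have "(\<Sum>x\<in>states n. pi_states n x * K n U x y) = (\<Sum>x\<in>states n. pi_cyc n (cpos n x) * Kcyc n U (cpos n x) (cpos n y))"
    using y K_eq_Kcyc[OF n3 _ y] by (intro sum.cong) (auto simp: pi_states_def)
  also have "\<dots> = (\<Sum>j<2*n. pi_cyc n j * Kcyc n U j (cpos n y))" by (rule sum.reindex_bij_betw[OF bij_cpos[OF n_pos]])
  also have "\<dots> = pi_cyc n (cpos n y)" by (rule pi_cyc_stationary[OF cpos_lt[OF y]])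
  finally show "(\<Sum>x\<in>states n. pi_states n x * K n U x y) = pi_states n y" using y by (simp add: pi_states_def)
qed

text \<open>Uniqueness: a stationary distribution is within 2 (1 - 2n minor)^q of pi_states for
  every q, and 2n minor > 0.\<close>

lemma stationary_unique: "is_stationary n U p \<Longrightarrow> p = pi_states n"
proof -
  assume p: "is_stationary n U p"
  let ?g = "1 - real (2*n) * minor n U"
  let ?D = "\<Sum>y\<in>states n. \<bar>p y - pi_states n y\<bar>"
  have bound: "?D \<le> 2 * ?g ^ q" for q
  proof -
    have "q * Suc (8*n) div Suc (8*n) = q" by (rule nonzero_mult_div_cancel_right) simp
    then show ?thesis using stationary_dist_le[OF p rows_converge[where t = "q * Suc (8*n)"]] by simp
  qed
  have g: "?g < 1" using n3 U3 by (simp add: minor_def)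
  have "?D \<le> 0"
  proof (rule ccontr)
    assume "\<not> ?D \<le> 0"
    then have "0 < ?D / 2" by simp
    then obtain q where "?g ^ q < ?D / 2" using real_arch_pow_inv[OF _ g] by blast
    then show False using bound[of q] by simp
  qed
  then have "\<forall>y\<in>states n. p y = pi_states n y"
    using sum_nonneg_eq_0_iff[OF finite_states[of n], of "\<lambda>y. \<bar>p y - pi_states n y\<bar>"]
    by (simp add: order_antisym sum_nonneg)
  then show "p = pi_states n"
    using p by (intro ext) (auto simp: is_stationary_def pi_states_def)
qed

lemma stat_eq_pi_states: "stat n U = pi_states n"
  unfolding stat_def using pi_states_stationary stationary_unique by (rule the_equality)

lemma v_le_geometric: "v n U t \<le> 2 * (1 - real (2*n) * minor n U) ^ (t div Suc (8*n))"
proof -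
  have "states n \<noteq> {}" using n3 by (auto simp: states_def)
  then show ?thesis
    unfolding v_def stat_eq_pi_states using rows_converge finite_states by (simp add: Max_le_iff)
qed

end

section \<open>The mixing-time bound\<close>

lemma ln2_ge_half: "ln (2::real) \<ge> 1/2"
proof -
  have "ln (1/2::real) \<le> 1/2 - 1" by (rule ln_le_minus_one) simp
  moreover have "ln (1/2::real) = - ln 2" by (simp add: ln_div)
  ultimately show ?thesis by simp
qed

lemma exp_le_damping:
  assumes U3: "U \<ge> (3::nat)"
  shows "exp (- 2 / real U) \<le> 1 - 1 / real U"
proof -
  have x0: "0 \<le> 1 / real U" and x1: "1 / real U \<le> 1/2" using U3 by auto
  have "- (1/real U) - 2 * (1/real U)^2 \<le> ln (1 - 1/real U)" by (rule ln_one_minus_pos_lower_bound[OF x0 x1])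
  moreover have "2 * (1/real U)^2 \<le> 1 / real U"
  proof -
    have "2 * (1/real U)^2 = (2 / real U) * (1 / real U)" by (simp add: power2_eq_square)
    also have "\<dots> \<le> 1 * (1 / real U)" using U3 x0 by (intro mult_right_mono) auto
    finally show ?thesis by simp
  qed
  ultimately have "- 2 / real U \<le> ln (1 - 1/real U)" by simp
  then have "exp (- 2 / real U) \<le> exp (ln (1 - 1/real U))" by simp
  also have "\<dots> = 1 - 1 / real U" using U3 by simp
  finally show ?thesis .
qed

lemma minor_mass_ge:
  assumes c: "c \<ge> 1" and U3: "U \<ge> 3" and h1: "real n / c \<le> real U" and h2: "real U \<le> c * real n"
  shows "exp (- 16 * c) / (32 * c) \<le> real (2*n) * minor n U"
proof -
  have Up: "real U > 0" using U3 by simp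
  have r1: "real n / real U \<le> c" using h1 c Up by (simp add: field_simps)
  have r2: "1 / c \<le> real n / real U" using h2 c Up by (simp add: field_simps)
  have "exp (- 16 * c) \<le> exp (- 16 * (real n / real U))" using r1 by simp
  also have "exp (- 16 * (real n / real U)) = exp (- 2 / real U) ^ (8*n)"
    by (simp add: exp_of_nat_mult[symmetric] field_simps)
  also have "\<dots> \<le> (1 - 1 / real U) ^ (8*n)" by (rule power_mono[OF exp_le_damping[OF U3]]) simp
  finally have th: "exp (- 16 * c) \<le> (1 - 1 / real U) ^ (8*n)" .
  have "exp (- 16 * c) / (32 * c) = (1 / c) * exp (- 16 * c) / 32" by simp
  also have "\<dots> \<le> (real n / real U) * (1 - 1 / real U) ^ (8*n) / 32"
    using r2 th c by (intro divide_right_mono mult_mono) auto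
  also have "\<dots> = real (2*n) * minor n U" unfolding minor_def using Up by (simp add: field_simps)
  finally show ?thesis .
qed

lemma real_div_lower: "0 < m \<Longrightarrow> real t / real m - 1 < real (t div m)"
proof -
  assume m: "0 < m"
  have "t < t div m * m + m" using div_mult_mod_eq[of t m] mod_less_divisor[OF m, of t] by linarith
  then have "t < (t div m + 1) * m" by (simp add: add_mult_distrib)
  then have "real t < real ((t div m + 1) * m)" by (simp only: of_nat_less_iff)
  then have "real t < (real (t div m) + 1) * real m" by (simp add: distrib_right)
  then show ?thesis using m by (simp add: field_simps)
qed

lemma geometric_decay_le:
  assumes \<delta>: "0 < \<delta>" "\<delta> \<le> 1" and g: "0 \<le> g" "g \<le> 1 - \<delta>" and m: "0 < m" "real m \<le> 9 * real n"
    and \<epsilon>: "0 < \<epsilon>" "\<epsilon> \<le> 1/2" and t: "9 * (2 / \<delta> + 2) * real n * ln (1/\<epsilon>) \<le> real t"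
  shows "2 * g ^ (t div m) \<le> \<epsilon>"
proof -
  let ?L = "ln (1/\<epsilon>)" and ?q = "t div m"
  have L2: "ln 2 \<le> ?L" using \<epsilon> by (simp add: field_simps del: ln_div)
  have "(2 / \<delta> + 2) * ?L \<le> real t / real m"
  proof -
    have "(2 / \<delta> + 2) * ?L * real m \<le> (2 / \<delta> + 2) * ?L * (9 * real n)"
      using m L2 ln2_ge_half \<delta> by (intro mult_left_mono) (auto intro!: mult_nonneg_nonneg)
    also have "\<dots> \<le> real t" using t by (simp add: mult_ac)
    finally show ?thesis using m by (simp add: field_simps)
  qed
  then have q: "(2 / \<delta> + 2) * ?L - 1 \<le> real ?q" using real_div_lower[OF m(1), of t] by linarith
  have "ln 2 + ?L \<le> \<delta> * real ?q"
  proof -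
    have "\<delta> * ((2 / \<delta> + 2) * ?L - 1) = 2 * ?L + \<delta> * (2 * ?L - 1)" using \<delta> by (simp add: field_simps)
    moreover have "0 \<le> \<delta> * (2 * ?L - 1)" using \<delta> L2 ln2_ge_half by simp
    moreover have "\<delta> * ((2 / \<delta> + 2) * ?L - 1) \<le> \<delta> * real ?q" using q \<delta> by (intro mult_left_mono) auto
    ultimately show ?thesis using L2 by linarith
  qed
  have "g ^ ?q \<le> exp (- \<delta>) ^ ?q"
    using g exp_ge_add_one_self[of "- \<delta>"] by (intro power_mono) auto
  also have "\<dots> = exp (- (\<delta> * real ?q))" by (simp add: exp_of_nat_mult[symmetric] mult.commute)
  also have "\<dots> \<le> exp (- (ln 2 + ?L))" using \<open>ln 2 + ?L \<le> \<delta> * real ?q\<close> by simp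
  also have "\<dots> = \<epsilon> / 2" using \<epsilon> by (simp add: exp_minus exp_add ln_div exp_diff)
  finally show ?thesis by simp
qed

text \<open>The main theorem: with \<delta> = exp(-16c)/(32c) the constant C = 9 (2/\<delta> + 2) works, because
  2n minor \<ge> \<delta> and the chain mixes geometrically over blocks of 8n+1 \<le> 9n steps.\<close>

theorem lemma12:
  fixes c :: real
  assumes "c \<ge> 1"
  shows "\<exists>C>0. \<forall>(n::nat) (U::nat) (\<epsilon>::real) (t::nat).
           n \<ge> 3 \<longrightarrow> U \<ge> 3 \<longrightarrow> real n / c \<le> real U \<longrightarrow> real U \<le> c * real n \<longrightarrow>
           0 < \<epsilon> \<longrightarrow> \<epsilon> \<le> 1/2 \<longrightarrow> real t \<ge> C * real n * ln (1/\<epsilon>) \<longrightarrow>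
           v n U t \<le> \<epsilon>"
proof -
  define \<delta> where "\<delta> = exp (- 16 * c) / (32 * c)"
  have \<delta>: "0 < \<delta>" "\<delta> \<le> 1" using assms by (auto simp: \<delta>_def intro: order.trans[of _ 1])
  show ?thesis
  proof (intro exI[of _ "9 * (2 / \<delta> + 2)"] conjI allI impI)
    show "0 < 9 * (2 / \<delta> + 2)" using \<delta> by (simp add: add_pos_pos)
    fix n U :: nat and \<epsilon> :: real and t :: nat
    assume n3: "n \<ge> 3" and U3: "U \<ge> 3" and ratio: "real n / c \<le> real U" "real U \<le> c * real n"
      and \<epsilon>: "0 < \<epsilon>" "\<epsilon> \<le> 1/2" and t: "9 * (2 / \<delta> + 2) * real n * ln (1/\<epsilon>) \<le> real t"
    interpret cyclic_chain n U using n3 U3 by unfold_locales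
    have "\<delta> \<le> real (2*n) * minor n U" unfolding \<delta>_def using assms U3 ratio by (rule minor_mass_ge)
    then have "2 * (1 - real (2*n) * minor n U) ^ (t div Suc (8*n)) \<le> \<epsilon>"
      using \<delta> minor_mass_le1 n3 \<epsilon> t by (intro geometric_decay_le[of \<delta>]) auto
    then show "v n U t \<le> \<epsilon>" using v_le_geometric by (rule order.trans[rotated])
  qed
qed

end
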